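(* Let $q$ be an odd prime power, $\omega$ a non-square in $\mathbb F_q$, $\epsilon\in\mathbb F_{q^2}$ with $\epsilon^2=\omega$, and write $z=z_1+\epsilon z_2$ ($z_i\in\mathbb F_q$) for $z\in\mathbb F_{q^2}$. Let $\mathcal C: aX^2+bXY+cXZ+dYZ+eZ^2=0$ be a non-singular conic of $\mathrm{PG}(2,q^2)$ with $d=1$, $b\notin\mathbb F_q$, and $-bcd+ad^2+b^2e$ a nonzero square in $\mathbb F_{q^2}$. Put $A=-a_2b_1+a_1b_2$, $B=b_2c_1-b_1c_2-a_2d_1+a_1d_2$, $C=-c_2d_1+c_1d_2+b_2e_1-b_1e_2$, $D=d_2e_1-d_1e_2$, and let $\mathcal S\subset\mathrm{PG}(3,q)$ be the cubic surface in coordinates $(t_1:t_2:X:Z)$ with equation $$2t_1t_2(b_1X+d_1Z)-(t_1^2+\omega t_2^2)(b_2X+d_2Z)+AX^3+BX^2Z+CXZ^2+DZ^3=0.$$ Let $n_0$ be the number of points of $\mathrm{PG}(3,q)$ on $\mathcal S$ with $t_1=t_2=0$. If $\mathcal S$ is non-singular, then $E_q(\mathcal C)=\frac12\big(q^2+(\alpha-1)q-n_0\big)$ where either $n_0\in\{0,2\}$ and $\alpha\in\{-2,0,2,4\}$, or $n_0\in\{1,3\}$ and $\alpha\in\{-1,1,3,5,7\}$.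
   Context: $E_q(\mathcal C)$ is the number of points of $\mathrm{PG}(2,q)$ (canonically embedded in $\mathrm{PG}(2,q^2)$) external to $\mathcal C$, i.e. lying on two tangent lines of $\mathcal C$. *)

theory Defs
  imports "HOL-Algebra.Algebraic_Closure_Type"
begin

(* The subfield F_q inside a field of q^2 elements: fixed points of Frobenius x |-> x^q *)
definition subF :: "nat \<Rightarrow> 'b::field set" where
  "subF q = {x. x ^ q = x}"

definition comp1 :: "'b::field set \<Rightarrow> 'b \<Rightarrow> 'b \<Rightarrow> 'b" where
  "comp1 K eps z = (THE u. \<exists>v. u \<in> K \<and> v \<in> K \<and> z = u + eps * v)"
definition comp2 :: "'b::field set \<Rightarrow> 'b \<Rightarrow> 'b \<Rightarrow> 'b" where
  "comp2 K eps z = (THE v. \<exists>u. u \<in> K \<and> v \<in> K \<and> z = u + eps * v)"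

(* projective points as classes of nonzero vectors up to nonzero scalars from K *)
definition pclass3 :: "'b::field set \<Rightarrow> 'b \<times> 'b \<times> 'b \<Rightarrow> ('b \<times> 'b \<times> 'b) set" where
  "pclass3 K v = {(l * fst v, l * fst (snd v), l * snd (snd v)) | l. l \<in> K \<and> l \<noteq> 0}"
definition pclass4 :: "'b::field set \<Rightarrow> 'b \<times> 'b \<times> 'b \<times> 'b \<Rightarrow> ('b \<times> 'b \<times> 'b \<times> 'b) set" where
  "pclass4 K v = {(l * fst v, l * fst (snd v), l * fst (snd (snd v)), l * snd (snd (snd v))) | l. l \<in> K \<and> l \<noteq> 0}"

definition conicF :: "'b::field \<Rightarrow> 'b \<Rightarrow> 'b \<Rightarrow> 'b \<Rightarrow> 'b \<Rightarrow> 'b \<times> 'b \<times> 'b \<Rightarrow> 'b" where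
  "conicF a b c d e v = (case v of (x, y, z) \<Rightarrow>
     a * x^2 + b * x * y + c * x * z + d * y * z + e * z^2)"

definition conicGrad :: "'b::field \<Rightarrow> 'b \<Rightarrow> 'b \<Rightarrow> 'b \<Rightarrow> 'b \<Rightarrow> 'b \<times> 'b \<times> 'b \<Rightarrow> 'b \<times> 'b \<times> 'b" where
  "conicGrad a b c d e v = (case v of (x, y, z) \<Rightarrow>
     (2 * a * x + b * y + c * z, b * x + d * z, c * x + d * y + 2 * e * z))"

definition conic_nonsingular :: "'b::field \<Rightarrow> 'b \<Rightarrow> 'b \<Rightarrow> 'b \<Rightarrow> 'b \<Rightarrow> bool" where
  "conic_nonsingular a b c d e \<longleftrightarrow>
     (\<forall>v. v \<noteq> (0, 0, 0) \<longrightarrow> conicGrad a b c d e v \<noteq> (0, 0, 0))"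

(* tangent lines of the conic (lines given as projective classes of coefficient vectors) *)
definition tangent_lines :: "'b::field \<Rightarrow> 'b \<Rightarrow> 'b \<Rightarrow> 'b \<Rightarrow> 'b \<Rightarrow> ('b \<times> 'b \<times> 'b) set set" where
  "tangent_lines a b c d e =
     {pclass3 UNIV (conicGrad a b c d e v) | v. v \<noteq> (0, 0, 0) \<and> conicF a b c d e v = 0}"

definition incident :: "('b::field \<times> 'b \<times> 'b) set \<Rightarrow> ('b \<times> 'b \<times> 'b) set \<Rightarrow> bool" where
  "incident pt lin \<longleftrightarrow> (\<exists>v\<in>pt. \<exists>u\<in>lin.
     fst u * fst v + fst (snd u) * fst (snd v) + snd (snd u) * snd (snd v) = 0)"

(* points of PG(2,q), canonically embedded in PG(2,q^2) *)
definition PG2_sub :: "'b::field set \<Rightarrow> ('b \<times> 'b \<times> 'b) set set" where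
  "PG2_sub K = {pclass3 UNIV v | v. v \<noteq> (0, 0, 0) \<and>
                  fst v \<in> K \<and> fst (snd v) \<in> K \<and> snd (snd v) \<in> K}"

definition Eq_conic :: "nat \<Rightarrow> 'b::field \<Rightarrow> 'b \<Rightarrow> 'b \<Rightarrow> 'b \<Rightarrow> 'b \<Rightarrow> nat" where
  "Eq_conic q a b c d e =
     card {pt \<in> PG2_sub (subF q). card {lin \<in> tangent_lines a b c d e. incident pt lin} = 2}"

definition cubicS :: "'k::field \<Rightarrow> 'k \<Rightarrow> 'k \<Rightarrow> 'k \<Rightarrow> 'k \<Rightarrow> 'k \<Rightarrow> 'k \<Rightarrow> 'k \<Rightarrow> 'k
                       \<Rightarrow> 'k \<times> 'k \<times> 'k \<times> 'k \<Rightarrow> 'k" where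
  "cubicS w b1 d1 b2 d2 cA cB cC cD v = (case v of (t1, t2, x, z) \<Rightarrow>
     2 * t1 * t2 * (b1 * x + d1 * z) - (t1^2 + w * t2^2) * (b2 * x + d2 * z)
     + cA * x^3 + cB * x^2 * z + cC * x * z^2 + cD * z^3)"

definition cubicS_grad :: "'k::field \<Rightarrow> 'k \<Rightarrow> 'k \<Rightarrow> 'k \<Rightarrow> 'k \<Rightarrow> 'k \<Rightarrow> 'k \<Rightarrow> 'k \<Rightarrow> 'k
                       \<Rightarrow> 'k \<times> 'k \<times> 'k \<times> 'k \<Rightarrow> 'k \<times> 'k \<times> 'k \<times> 'k" where
  "cubicS_grad w b1 d1 b2 d2 cA cB cC cD v = (case v of (t1, t2, x, z) \<Rightarrow>
     (2 * t2 * (b1 * x + d1 * z) - 2 * t1 * (b2 * x + d2 * z),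
      2 * t1 * (b1 * x + d1 * z) - 2 * w * t2 * (b2 * x + d2 * z),
      2 * t1 * t2 * b1 - (t1^2 + w * t2^2) * b2 + 3 * cA * x^2 + 2 * cB * x * z + cC * z^2,
      2 * t1 * t2 * d1 - (t1^2 + w * t2^2) * d2 + cB * x^2 + 2 * cC * x * z + 3 * cD * z^2))"

definition cubicS_nonsingular :: "'b::field \<Rightarrow> 'b \<Rightarrow> 'b \<Rightarrow> 'b \<Rightarrow> 'b \<Rightarrow> 'b \<Rightarrow> 'b \<Rightarrow> 'b \<Rightarrow> 'b \<Rightarrow> bool" where
  "cubicS_nonsingular w b1 d1 b2 d2 cA cB cC cD \<longleftrightarrow>
     (\<forall>v :: 'b alg_closure \<times> 'b alg_closure \<times> 'b alg_closure \<times> 'b alg_closure.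
        v \<noteq> (0, 0, 0, 0) \<longrightarrow>
        \<not> (cubicS (to_ac w) (to_ac b1) (to_ac d1) (to_ac b2) (to_ac d2)
                  (to_ac cA) (to_ac cB) (to_ac cC) (to_ac cD) v = 0 \<and>
           cubicS_grad (to_ac w) (to_ac b1) (to_ac d1) (to_ac b2) (to_ac d2)
                  (to_ac cA) (to_ac cB) (to_ac cC) (to_ac cD) v = (0, 0, 0, 0)))"

definition n0_points :: "'b::field set \<Rightarrow> 'b \<Rightarrow> 'b \<Rightarrow> 'b \<Rightarrow> 'b \<Rightarrow> 'b \<Rightarrow> 'b \<Rightarrow> 'b \<Rightarrow> 'b \<Rightarrow> 'b
                        \<Rightarrow> ('b \<times> 'b \<times> 'b \<times> 'b) set set" where
  "n0_points K w b1 d1 b2 d2 cA cB cC cD =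
     {pclass4 K (0, 0, x, z) | x z. x \<in> K \<and> z \<in> K \<and> (x, z) \<noteq> (0, 0) \<and>
        cubicS w b1 d1 b2 d2 cA cB cC cD (0, 0, x, z) = 0}"

end

(* Write K = F_q inside F = F_{q^2}, and Delta = -bc + a + b^2 e (d = 1). The conic
   y (b x + z) + (a x^2 + c x z + e z^2) = 0 is parametrised from its point (0:1:0) by PG(1).
   The tangent at the parameter u passes through p iff a binary quadratic form in u vanishes,
   and that form has discriminant 4 Delta Q(p); as Delta is a nonzero square, p lies on exactly
   two tangents iff Q(p) is a nonzero square of F.

   A point of PG(2,q) other than (0:1:0) lies on a line through (0:1:0) and (x:0:z), with
   (x:z) in PG(1,q), where Q = y L + R, L = b x + z, R = a x^2 + c x z + e z^2. Over the basis
   1, eps of F over K, L and R are K-dependent exactly when the cubic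
   A x^3 + B x^2 z + C x z^2 + D z^3 vanishes, i.e. at the n0 points of S with t1 = t2 = 0.
   On the remaining lines the values y L + R (y in K) meet the nonzero squares
   (q + 1)/2 - [L is a square] times, on the n0 dependent ones (q - 1) [L is a square] times.
   Since L is a square for exactly (q + 1)/2 of the q + 1 lines, summing gives
   2 E_q = q^2 + (1 + 2 s - n0) q - n0 with s <= n0 <= 3 the number of dependent lines on which
   L is a square, i.e. alpha = 2 + 2 s - n0. *)

theory Submission
  imports Defs "HOL-Number_Theory.Residues" "HOL-Computational_Algebra.Polynomial"
begin

section \<open>Quadratic extensions of finite fields\<close>

lemma card_eq_sum_card_fibres:
  assumes "finite A"
  shows "card A = (\<Sum>y\<in>f ` A. card {x\<in>A. f x = y})"
proof -
  have "A = (\<Union>y\<in>f ` A. {x\<in>A. f x = y})" by auto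
  also have "card \<dots> = (\<Sum>y\<in>f ` A. card {x\<in>A. f x = y})"
    by (rule card_UN_disjoint) (use assms in auto)
  finally show ?thesis .
qed

text \<open>As \<open>finite_field_power_card_eq_same\<close>, but for the sort \<open>{finite, field}\<close> used here.\<close>
lemma power_card_UNIV_eq_self:
  fixes x :: "'a::{finite,field}"
  shows "x ^ card (UNIV :: 'a set) = x"
proof (cases "x = 0")
  case False
  let ?U = "UNIV - {0 :: 'a}"
  have "(\<Prod>y\<in>?U. x * y) = (\<Prod>y\<in>?U. y)"
    by (rule prod.reindex_bij_witness[of _ "\<lambda>y. y / x" "\<lambda>y. x * y"]) (use False in auto)
  moreover have "(\<Prod>y\<in>?U. x * y) = x ^ card ?U * (\<Prod>y\<in>?U. y)" by (simp add: prod.distrib)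
  moreover have "(\<Prod>y\<in>?U. y) \<noteq> 0" by simp
  ultimately have "x ^ card ?U = 1" by simp
  moreover have "card (UNIV :: 'a set) = Suc (card ?U)" by (rule card_Suc_Diff1[symmetric]) simp_all
  ultimately show ?thesis by (simp only: power_Suc mult_1_right)
qed (use finite_UNIV_card_ge_0[where ?'a = 'a] in auto)

lemma card_roots_power_eq_affine_le:
  fixes a c :: "'a::field"
  assumes "n > 1"
  shows "card {x. x ^ n = a * x + c} \<le> n"
proof -
  let ?p = "monom 1 n + [:- c, - a:]"
  have "degree [:- c, - a:] < n" using assms by (simp add: degree_pCons_eq_if)
  hence deg: "degree ?p = n" using assms by (subst degree_add_eq_left) (simp_all add: degree_monom_eq)
  hence "?p \<noteq> 0" using assms by auto
  hence "card {x. poly ?p x = 0} \<le> n" using card_poly_roots_bound[of ?p] deg by simp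
  moreover have "{x. poly ?p x = 0} = {x. x ^ n = a * x + c}"
    by (auto simp: poly_monom algebra_simps eq_neg_iff_add_eq_0)
  ultimately show ?thesis by simp
qed

lemma card_image_square:
  fixes A :: "'a::field set"
  assumes "(2::'a) \<noteq> 0" "finite A" "0 \<notin> A" "\<And>x. x \<in> A \<Longrightarrow> - x \<in> A"
  shows "2 * card ((\<lambda>x. x ^ 2) ` A) = card A"
proof -
  have fibre: "card {x\<in>A. x ^ 2 = y} = 2" if "y \<in> (\<lambda>x. x ^ 2) ` A" for y
  proof -
    from that obtain x where x: "x \<in> A" "y = x ^ 2" by blast
    have "{x'\<in>A. x' ^ 2 = y} = {x, - x}" using x assms(4) by (auto simp: power2_eq_iff)
    moreover have "x \<noteq> - x" using x assms(1,3) by (metis add_eq_0_iff2 mult_2 mult_eq_0_iff)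
    ultimately show ?thesis by simp
  qed
  have "card A = (\<Sum>y\<in>(\<lambda>x. x ^ 2) ` A. card {x\<in>A. x ^ 2 = y})"
    by (rule card_eq_sum_card_fibres[OF assms(2)])
  also have "\<dots> = (\<Sum>y\<in>(\<lambda>x. x ^ 2) ` A. 2)" using fibre by (intro sum.cong) auto
  finally show ?thesis by simp
qed

lemma ex_square_eq_square_mult_iff:
  fixes r z :: "'a::field"
  assumes "r \<noteq> 0"
  shows "(\<exists>t. t ^ 2 = r ^ 2 * z) \<longleftrightarrow> (\<exists>t. t ^ 2 = z)"
proof
  assume "\<exists>t. t ^ 2 = r ^ 2 * z"
  then obtain t where "t ^ 2 = r ^ 2 * z" by blast
  hence "(t / r) ^ 2 = z" using assms by (simp add: power_divide)
  thus "\<exists>t. t ^ 2 = z" by blast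
next
  assume "\<exists>t. t ^ 2 = z"
  then obtain t where "t ^ 2 = z" by blast
  hence "(r * t) ^ 2 = r ^ 2 * z" by (simp add: power_mult_distrib)
  thus "\<exists>t. t ^ 2 = r ^ 2 * z" by blast
qed

locale quadratic_extension =
  fixes q :: nat and \<epsilon> \<omega> :: "'b::{finite,field}"
  assumes q_prime_power: "\<exists>p k. prime p \<and> k > 0 \<and> q = p ^ k"
    and q_odd: "odd q"
    and card_UNIV: "card (UNIV :: 'b set) = q ^ 2"
    and \<omega>_in_subF: "\<omega> \<in> subF q"
    and \<omega>_nonsquare: "\<not> (\<exists>s \<in> subF q. s ^ 2 = \<omega>)"
    and \<epsilon>_square: "\<epsilon> ^ 2 = \<omega>"
begin

lemma prime_CHAR: "prime CHAR('b)"
  by (rule prime_CHAR_semidom[OF finite_imp_CHAR_pos[OF finite_UNIV]])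

lemma q_eq_CHAR_power: "\<exists>k. k > 0 \<and> q = CHAR('b) ^ k"
proof -
  obtain p k where pk: "prime p" "k > 0" "q = p ^ k" using q_prime_power by blast
  have "CHAR('b) dvd p ^ (2 * k)"
    using CHAR_dvd_CARD[where 'a='b] card_UNIV pk by (simp add: power_mult mult.commute)
  hence "CHAR('b) = p" using pk(1) prime_CHAR prime_dvd_power primes_dvd_imp_eq by blast
  thus ?thesis using pk by blast
qed

lemma q_gt_1: "q > 1"
proof -
  obtain k where "k > 0" "q = CHAR('b) ^ k" using q_eq_CHAR_power by blast
  moreover have "CHAR('b) > 1" using prime_CHAR prime_gt_1_nat by blast
  ultimately show ?thesis using one_less_power by blast
qed

lemma two_neq_zero: "(2::'b) \<noteq> 0"
proof
  assume "(2::'b) = 0"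
  hence "(of_nat 2 :: 'b) = 0" by simp
  hence "CHAR('b) dvd 2" by (simp only: of_nat_eq_0_iff_char_dvd)
  moreover have "CHAR('b) dvd q" using q_eq_CHAR_power by (metis dvd_power)
  ultimately have "CHAR('b) dvd gcd 2 q" by simp
  moreover have "gcd 2 q = 1" using q_odd by (simp flip: coprime_iff_gcd_eq_1)
  ultimately show False using prime_CHAR by simp
qed

lemma frobenius_add: "(x + y) ^ q = x ^ q + (y::'b) ^ q"
proof -
  obtain k where "q = CHAR('b) ^ k" using q_eq_CHAR_power by blast
  thus ?thesis by (rule freshmans_dream'[OF prime_CHAR])
qed

lemma frobenius_uminus: "(- x) ^ q = - ((x::'b) ^ q)"
  using q_odd by (simp add: power_minus_odd)

lemma frobenius_diff: "(x - y) ^ q = x ^ q - (y::'b) ^ q"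
  using frobenius_add[of x "- y"] frobenius_uminus[of y] by simp

lemma subF_0: "(0::'b) \<in> subF q" using q_gt_1 by (simp add: subF_def)
lemma subF_1: "(1::'b) \<in> subF q" by (simp add: subF_def)
lemma subF_add: "(x::'b) \<in> subF q \<Longrightarrow> y \<in> subF q \<Longrightarrow> x + y \<in> subF q"
  by (simp add: subF_def frobenius_add)
lemma subF_diff: "(x::'b) \<in> subF q \<Longrightarrow> y \<in> subF q \<Longrightarrow> x - y \<in> subF q"
  by (simp add: subF_def frobenius_diff)
lemma subF_uminus: "(x::'b) \<in> subF q \<Longrightarrow> - x \<in> subF q"
  by (simp add: subF_def frobenius_uminus)
lemma subF_mult: "(x::'b) \<in> subF q \<Longrightarrow> y \<in> subF q \<Longrightarrow> x * y \<in> subF q"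
  by (simp add: subF_def power_mult_distrib)
lemma subF_divide: "(x::'b) \<in> subF q \<Longrightarrow> y \<in> subF q \<Longrightarrow> x / y \<in> subF q"
  by (simp add: subF_def power_divide)
lemma subF_power: "(x::'b) \<in> subF q \<Longrightarrow> x ^ n \<in> subF q"
  by (induction n) (auto simp: subF_1 subF_mult)

lemmas subF_closed = subF_0 subF_1 subF_add subF_diff subF_uminus subF_mult subF_divide subF_power

text \<open>The additive map \<open>x \<mapsto> x\<^sup>q - x\<close> has kernel \<open>F\<^sub>q\<close> and takes values among the
  at most \<open>q\<close> roots of \<open>y\<^sup>q = - y\<close>, so \<open>q\<^sup>2 \<le> q |F\<^sub>q|\<close>.\<close>
lemma card_subF: "card (subF q :: 'b set) = q"
proof -
  let ?K = "subF q :: 'b set"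
  define \<phi> where "\<phi> x = x ^ q - x" for x :: 'b
  have card_K_le: "card ?K \<le> q"
    unfolding subF_def using card_roots_power_eq_affine_le[OF q_gt_1, of 1 0] by simp
  have "\<phi> ` UNIV \<subseteq> {y. y ^ q = - 1 * y + 0}"
  proof clarify
    fix x :: 'b
    have "(x ^ q) ^ q = x"
      using power_card_UNIV_eq_self[of x] card_UNIV by (simp add: power2_eq_square power_mult)
    thus "\<phi> x ^ q = - 1 * \<phi> x + 0" by (simp add: \<phi>_def frobenius_diff)
  qed
  hence "card (\<phi> ` UNIV) \<le> card {y::'b. y ^ q = - 1 * y + 0}" by (intro card_mono) simp_all
  also have "\<dots> \<le> q" by (rule card_roots_power_eq_affine_le[OF q_gt_1])
  finally have card_image_le: "card (\<phi> ` UNIV) \<le> q" .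
  have fibre: "card {x\<in>UNIV. \<phi> x = y} = card ?K" if "y \<in> range \<phi>" for y
  proof -
    obtain x0 where y: "y = \<phi> x0" using \<open>y \<in> range \<phi>\<close> by blast
    have "{x\<in>UNIV. \<phi> x = \<phi> x0} = (\<lambda>k. k + x0) ` ?K"
    proof (intro equalityI subsetI)
      fix x assume "x \<in> {x\<in>UNIV. \<phi> x = \<phi> x0}"
      hence "x - x0 \<in> ?K" by (simp add: \<phi>_def subF_def frobenius_diff algebra_simps)
      thus "x \<in> (\<lambda>k. k + x0) ` ?K" by (auto intro!: image_eqI[of _ _ "x - x0"])
    qed (auto simp: \<phi>_def subF_def frobenius_add)
    thus ?thesis unfolding y by (simp add: card_image inj_on_def)
  qed
  have "q * q = card (UNIV :: 'b set)" using card_UNIV by (simp add: power2_eq_square)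
  also have "\<dots> = (\<Sum>y\<in>\<phi> ` UNIV. card {x\<in>UNIV. \<phi> x = y})" by (rule card_eq_sum_card_fibres) simp
  also have "\<dots> = card (\<phi> ` UNIV) * card ?K" using fibre by simp
  also have "\<dots> \<le> q * card ?K" using card_image_le by simp
  finally show ?thesis using card_K_le q_gt_1 by simp
qed

lemma \<epsilon>_notin_subF: "\<epsilon> \<notin> subF q"
  using \<omega>_nonsquare \<epsilon>_square by blast

lemma subF_decomp_eq_0:
  assumes "u \<in> subF q" "v \<in> subF q" "u + \<epsilon> * v = 0"
  shows "u = 0 \<and> v = 0"
proof (cases "v = 0")
  case False
  have "\<epsilon> * v = - u" using assms(3) by (simp add: eq_neg_iff_add_eq_0 add.commute)
  hence "\<epsilon> = - u / v" using False by (simp add: field_simps)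
  hence "\<epsilon> \<in> subF q" using assms subF_closed by simp
  thus ?thesis using \<epsilon>_notin_subF by simp
qed (use assms in simp)

lemma subF_decomp_unique:
  assumes "u \<in> subF q" "v \<in> subF q" "u' \<in> subF q" "v' \<in> subF q" "u + \<epsilon> * v = u' + \<epsilon> * v'"
  shows "u = u' \<and> v = v'"
proof -
  have "(u - u') + \<epsilon> * (v - v') = 0" using assms(5) by (simp add: algebra_simps)
  thus ?thesis using subF_decomp_eq_0[of "u - u'" "v - v'"] assms subF_diff by simp
qed

lemma subF_decomp_exists: "\<exists>u v. u \<in> subF q \<and> v \<in> subF q \<and> (z::'b) = u + \<epsilon> * v"
proof -
  let ?K = "subF q :: 'b set"
  let ?f = "\<lambda>(u, v). u + \<epsilon> * v"
  have "inj_on ?f (?K \<times> ?K)"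
  proof (rule inj_onI)
    fix x y assume "x \<in> ?K \<times> ?K" "y \<in> ?K \<times> ?K" "?f x = ?f y"
    thus "x = y" using subF_decomp_unique[of "fst x" "snd x" "fst y" "snd y"] by (cases x, cases y) auto
  qed
  hence "card (?f ` (?K \<times> ?K)) = card (UNIV :: 'b set)"
    using card_UNIV card_subF by (simp add: card_image card_cartesian_product power2_eq_square)
  hence "?f ` (?K \<times> ?K) = UNIV" by (intro card_subset_eq) simp_all
  hence "z \<in> ?f ` (?K \<times> ?K)" by simp
  thus ?thesis by auto
qed

lemma comp1_eq: "u \<in> subF q \<Longrightarrow> v \<in> subF q \<Longrightarrow> comp1 (subF q) \<epsilon> (u + \<epsilon> * v) = u"
  unfolding comp1_def by (rule the_equality) (use subF_decomp_unique in blast)+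

lemma comp2_eq: "u \<in> subF q \<Longrightarrow> v \<in> subF q \<Longrightarrow> comp2 (subF q) \<epsilon> (u + \<epsilon> * v) = v"
  unfolding comp2_def by (rule the_equality) (use subF_decomp_unique in blast)+

lemma comp1_1: "comp1 (subF q) \<epsilon> 1 = 1" and comp2_1: "comp2 (subF q) \<epsilon> 1 = 0"
  using comp1_eq[OF subF_1 subF_0] comp2_eq[OF subF_1 subF_0] by simp_all

text \<open>The nonzero squares of \<open>F\<^sub>q\<close> and their \<open>\<omega>\<close>-multiples exhaust \<open>F\<^sub>q\<^sup>*\<close>,
  and \<open>\<omega> = \<epsilon>\<^sup>2\<close> is a square in the big field.\<close>
lemma subF_nonzero_is_square:
  assumes "k \<in> subF q" "k \<noteq> 0"
  shows "\<exists>t. t ^ 2 = (k::'b)"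
proof -
  let ?K = "subF q - {0} :: 'b set"
  let ?S = "(\<lambda>x. x ^ 2) ` ?K"
  let ?T = "(\<lambda>x. \<omega> * x) ` ?S"
  have card_K: "card ?K = q - 1" using card_subF subF_0 by simp
  have card_S: "2 * card ?S = q - 1"
    using card_image_square[OF two_neq_zero, of ?K] card_K subF_uminus by auto
  have \<omega>_nonzero: "\<omega> \<noteq> 0" using \<omega>_nonsquare subF_0 by auto
  have card_T: "card ?T = card ?S" using \<omega>_nonzero by (intro card_image) (auto simp: inj_on_def)
  have "?S \<inter> ?T = {}"
  proof (rule ccontr)
    assume "?S \<inter> ?T \<noteq> {}"
    then obtain x y where xy: "x \<in> ?K" "y \<in> ?K" "x ^ 2 = \<omega> * y ^ 2" by auto
    hence "(x / y) ^ 2 = \<omega>" by (simp add: power_divide)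
    moreover have "x / y \<in> subF q" using xy subF_divide by auto
    ultimately show False using \<omega>_nonsquare by blast
  qed
  hence "card (?S \<union> ?T) = card ?S + card ?T" by (intro card_Un_disjoint) simp_all
  hence "card (?S \<union> ?T) = card ?K" using card_T card_S card_K by simp
  moreover have "?S \<union> ?T \<subseteq> ?K" using \<omega>_in_subF \<omega>_nonzero by (auto intro: subF_mult subF_power)
  ultimately have "?S \<union> ?T = ?K" by (metis card_subset_eq finite)
  then obtain x where "k = x ^ 2 \<or> k = \<omega> * x ^ 2" using assms by blast
  thus ?thesis using \<epsilon>_square by (metis power_mult_distrib)
qed

lemma ex_square_subF_mult_iff:
  assumes "k \<in> subF q" "k \<noteq> 0"
  shows "(\<exists>t. t ^ 2 = k * z) \<longleftrightarrow> (\<exists>t. t ^ 2 = (z::'b))"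
proof -
  obtain s where s: "s ^ 2 = k" using subF_nonzero_is_square[OF assms] by blast
  hence "s \<noteq> 0" using assms(2) by auto
  thus ?thesis using ex_square_eq_square_mult_iff s by blast
qed

lemma card_nonzero_squares: "2 * card {z::'b. z \<noteq> 0 \<and> (\<exists>t. t ^ 2 = z)} = q ^ 2 - 1"
proof -
  have "(\<lambda>x. x ^ 2) ` (UNIV - {0::'b}) = {z::'b. z \<noteq> 0 \<and> (\<exists>t. t ^ 2 = z)}" by auto
  moreover have "card (UNIV - {0::'b}) = q ^ 2 - 1" using card_UNIV by (simp add: card_Diff_singleton)
  ultimately show ?thesis using card_image_square[OF two_neq_zero, of "UNIV - {0::'b}"] by auto
qed

lemma subF_combination_eq_0:
  assumes K: "L1 \<in> subF q" "L2 \<in> subF q" "R1 \<in> subF q" "R2 \<in> subF q" "\<mu> \<in> subF q" "\<nu> \<in> subF q"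
    and det: "L2 * R1 - L1 * R2 \<noteq> 0"
    and eq: "\<mu> * (L1 + \<epsilon> * L2) + \<nu> * (R1 + \<epsilon> * R2) = 0"
  shows "\<mu> = 0 \<and> \<nu> = 0"
proof -
  have "(\<mu> * L1 + \<nu> * R1) + \<epsilon> * (\<mu> * L2 + \<nu> * R2) = 0" using eq by (simp add: algebra_simps)
  moreover have "\<mu> * L1 + \<nu> * R1 \<in> subF q" "\<mu> * L2 + \<nu> * R2 \<in> subF q"
    using K by (simp_all add: subF_add subF_mult)
  ultimately have z: "\<mu> * L1 + \<nu> * R1 = 0" "\<mu> * L2 + \<nu> * R2 = 0"
    using subF_decomp_eq_0 by blast+
  have "\<mu> * (L2 * R1 - L1 * R2) = R1 * (\<mu> * L2 + \<nu> * R2) - R2 * (\<mu> * L1 + \<nu> * R1)"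
    "\<nu> * (L2 * R1 - L1 * R2) = L2 * (\<mu> * L1 + \<nu> * R1) - L1 * (\<mu> * L2 + \<nu> * R2)"
    by (simp_all add: algebra_simps)
  thus ?thesis using z det by simp
qed

lemma subF_combination_exists:
  assumes K: "L1 \<in> subF q" "L2 \<in> subF q" "R1 \<in> subF q" "R2 \<in> subF q"
    and det: "L2 * R1 - L1 * R2 \<noteq> 0"
  shows "\<exists>\<mu> \<nu>. \<mu> \<in> subF q \<and> \<nu> \<in> subF q \<and> w = \<mu> * (L1 + \<epsilon> * L2) + \<nu> * (R1 + \<epsilon> * R2)"
proof -
  obtain w1 w2 where w: "w1 \<in> subF q" "w2 \<in> subF q" "w = w1 + \<epsilon> * w2"
    using subF_decomp_exists by blast
  define g where "g = L2 * R1 - L1 * R2"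
  define \<mu> where "\<mu> = (w2 * R1 - w1 * R2) / g"
  define \<nu> where "\<nu> = (L2 * w1 - L1 * w2) / g"
  have g: "g \<noteq> 0" using det by (simp add: g_def)
  have "\<mu> * L1 + \<nu> * R1 = ((w2 * R1 - w1 * R2) * L1 + (L2 * w1 - L1 * w2) * R1) / g"
    by (simp add: \<mu>_def \<nu>_def add_divide_distrib)
  also have "(w2 * R1 - w1 * R2) * L1 + (L2 * w1 - L1 * w2) * R1 = w1 * g"
    by (simp add: g_def algebra_simps)
  finally have w1: "\<mu> * L1 + \<nu> * R1 = w1" using g by simp
  have "\<mu> * L2 + \<nu> * R2 = ((w2 * R1 - w1 * R2) * L2 + (L2 * w1 - L1 * w2) * R2) / g"
    by (simp add: \<mu>_def \<nu>_def add_divide_distrib)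
  also have "(w2 * R1 - w1 * R2) * L2 + (L2 * w1 - L1 * w2) * R2 = w2 * g"
    by (simp add: g_def algebra_simps)
  finally have "\<mu> * L2 + \<nu> * R2 = w2" using g by simp
  moreover have "\<mu> * (L1 + \<epsilon> * L2) + \<nu> * (R1 + \<epsilon> * R2) = (\<mu> * L1 + \<nu> * R1) + \<epsilon> * (\<mu> * L2 + \<nu> * R2)"
    by (simp add: algebra_simps)
  ultimately have "w = \<mu> * (L1 + \<epsilon> * L2) + \<nu> * (R1 + \<epsilon> * R2)" using w1 w(3) by simp
  moreover have "\<mu> \<in> subF q" "\<nu> \<in> subF q" using K w by (simp_all add: \<mu>_def \<nu>_def g_def subF_closed)
  ultimately show ?thesis by blast
qed

text \<open>Every element is uniquely \<open>\<mu> L + \<nu> R\<close> with \<open>\<mu>, \<nu> \<in> F\<^sub>q\<close>; off the line \<open>F\<^sub>q L\<close>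
  we have \<open>\<nu> \<noteq> 0\<close>, and the element is \<open>\<nu> (y L + R)\<close> with \<open>y = \<mu> / \<nu>\<close>.\<close>
lemma nonzero_squares_off_line_eq_image:
  fixes L1 L2 R1 R2 :: 'b
  assumes K: "L1 \<in> subF q" "L2 \<in> subF q" "R1 \<in> subF q" "R2 \<in> subF q"
    and det: "L2 * R1 - L1 * R2 \<noteq> 0"
  defines "L \<equiv> L1 + \<epsilon> * L2" and "R \<equiv> R1 + \<epsilon> * R2"
  shows "{z. z \<noteq> 0 \<and> (\<exists>t. t ^ 2 = z)} - (\<lambda>l. l * L) ` (subF q - {0})
    = (\<lambda>(l, y). l * (y * L + R)) ` ((subF q - {0}) \<times> {y \<in> subF q. y * L + R \<noteq> 0 \<and> (\<exists>t. t ^ 2 = y * L + R)})"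
    (is "_ = ?\<Phi> ` ((?K - {0}) \<times> ?Y)")
proof (intro equalityI subsetI)
  have indep: "\<mu> = 0 \<and> \<nu> = 0" if "\<mu> \<in> ?K" "\<nu> \<in> ?K" "\<mu> * L + \<nu> * R = 0" for \<mu> \<nu>
    using subF_combination_eq_0[OF K that(1,2) det] that(3) by (simp add: L_def R_def)
  fix w assume "w \<in> ?\<Phi> ` ((?K - {0}) \<times> ?Y)"
  then obtain l y where ly: "l \<in> ?K" "l \<noteq> 0" "y \<in> ?K" "y * L + R \<noteq> 0" "\<exists>t. t ^ 2 = y * L + R"
    and w: "w = l * (y * L + R)" by auto
  have "w \<noteq> l' * L" if "l' \<in> ?K" for l'
  proof
    assume "w = l' * L"
    hence "(l * y - l') * L + l * R = 0" using w by (simp add: algebra_simps)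
    thus False using indep[of "l * y - l'" l] ly that by (simp add: subF_closed)
  qed
  thus "w \<in> {z. z \<noteq> 0 \<and> (\<exists>t. t ^ 2 = z)} - (\<lambda>l. l * L) ` (?K - {0})"
    using ex_square_subF_mult_iff[of l "y * L + R"] ly w by auto
next
  fix w assume w: "w \<in> {z. z \<noteq> 0 \<and> (\<exists>t. t ^ 2 = z)} - (\<lambda>l. l * L) ` (?K - {0})"
  obtain \<mu> \<nu> where \<mu>\<nu>: "\<mu> \<in> ?K" "\<nu> \<in> ?K" "w = \<mu> * L + \<nu> * R"
    using subF_combination_exists[OF K det, of w] unfolding L_def R_def by blast
  have "\<nu> \<noteq> 0" using w \<mu>\<nu> by auto
  define y where "y = \<mu> / \<nu>"
  have wy: "w = \<nu> * (y * L + R)" using \<mu>\<nu> \<open>\<nu> \<noteq> 0\<close> by (simp add: y_def field_simps)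
  hence "(\<nu>, y) \<in> (?K - {0}) \<times> ?Y"
    using ex_square_subF_mult_iff[of \<nu> "y * L + R"] \<mu>\<nu> \<open>\<nu> \<noteq> 0\<close> w by (auto simp: y_def subF_divide)
  thus "w \<in> ?\<Phi> ` ((?K - {0}) \<times> ?Y)" using wy by force
qed

lemma card_nonzero_squares_off_line:
  fixes L1 L2 R1 R2 :: 'b
  assumes K: "L1 \<in> subF q" "L2 \<in> subF q" "R1 \<in> subF q" "R2 \<in> subF q"
    and det: "L2 * R1 - L1 * R2 \<noteq> 0"
  defines "L \<equiv> L1 + \<epsilon> * L2" and "R \<equiv> R1 + \<epsilon> * R2"
  shows "card ({z. z \<noteq> 0 \<and> (\<exists>t. t ^ 2 = z)} - (\<lambda>l. l * L) ` (subF q - {0}))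
           = (q - 1) * card {y \<in> subF q. y * L + R \<noteq> 0 \<and> (\<exists>t. t ^ 2 = y * L + R)}"
proof -
  let ?K = "subF q :: 'b set"
  let ?Y = "{y \<in> ?K. y * L + R \<noteq> 0 \<and> (\<exists>t. t ^ 2 = y * L + R)}"
  have indep: "\<mu> = 0 \<and> \<nu> = 0" if "\<mu> \<in> ?K" "\<nu> \<in> ?K" "\<mu> * L + \<nu> * R = 0" for \<mu> \<nu>
    using subF_combination_eq_0[OF K that(1,2) det] that(3) by (simp add: L_def R_def)
  have "inj_on (\<lambda>(l, y). l * (y * L + R)) ((?K - {0}) \<times> ?Y)"
  proof (rule inj_onI)
    fix u u' assume u: "u \<in> (?K - {0}) \<times> ?Y" and u': "u' \<in> (?K - {0}) \<times> ?Y"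
      and eq: "(\<lambda>(l, y). l * (y * L + R)) u = (\<lambda>(l, y). l * (y * L + R)) u'"
    obtain l y l' y' where [simp]: "u = (l, y)" "u' = (l', y')" by (cases u, cases u')
    have "(l * y - l' * y') * L + (l - l') * R = 0" using eq by (simp add: algebra_simps)
    hence "l * y - l' * y' = 0 \<and> l - l' = 0" using u u' by (intro indep) (auto simp: subF_closed)
    thus "u = u'" using u by auto
  qed
  thus ?thesis
    unfolding nonzero_squares_off_line_eq_image[OF K det, folded L_def R_def]
    using card_subF subF_0 by (simp add: card_image card_cartesian_product)
qed

lemma card_square_values_independent:
  fixes L1 L2 R1 R2 :: 'b
  assumes K: "L1 \<in> subF q" "L2 \<in> subF q" "R1 \<in> subF q" "R2 \<in> subF q"
    and det: "L2 * R1 - L1 * R2 \<noteq> 0"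
  defines "L \<equiv> L1 + \<epsilon> * L2" and "R \<equiv> R1 + \<epsilon> * R2"
  shows "2 * card {y \<in> subF q. y * L + R \<noteq> 0 \<and> (\<exists>t. t ^ 2 = y * L + R)}
           + 2 * (if \<exists>t. t ^ 2 = L then 1 else 0) = q + 1"
proof -
  let ?K = "subF q :: 'b set"
  let ?Sq = "{z::'b. z \<noteq> 0 \<and> (\<exists>t. t ^ 2 = z)}"
  let ?D = "(\<lambda>l. l * L) ` (?K - {0})"
  define N where "N = card {y \<in> ?K. y * L + R \<noteq> 0 \<and> (\<exists>t. t ^ 2 = y * L + R)}"
  define s where "s = (if \<exists>t. t ^ 2 = L then 1 else (0::nat))"
  have "L \<noteq> 0" using subF_combination_eq_0[OF K subF_1 subF_0 det] by (auto simp: L_def)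
  hence card_D: "card ?D = q - 1" using card_subF subF_0 by (subst card_image) (auto simp: inj_on_def)
  have "card (?Sq - ?D) + (q - 1) * s = card ?Sq"
  proof (cases "\<exists>t. t ^ 2 = L")
    case True
    hence "?D \<subseteq> ?Sq" using \<open>L \<noteq> 0\<close> ex_square_subF_mult_iff by auto
    thus ?thesis using True card_D card_Diff_subset[of ?D ?Sq] card_mono[of ?Sq ?D] by (simp add: s_def)
  next
    case False
    hence "?Sq \<inter> ?D = {}" using \<open>L \<noteq> 0\<close> ex_square_subF_mult_iff by auto
    thus ?thesis using False by (simp add: s_def Diff_triv)
  qed
  moreover obtain m where m: "q = Suc m" "m > 0" using q_gt_1 by (cases q) auto
  ultimately have "m * (2 * N + 2 * s) = m * (m + 2)"
    using card_nonzero_squares_off_line[OF K det] card_nonzero_squares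
    by (simp add: N_def L_def R_def algebra_simps power2_eq_square)
  hence "2 * N + 2 * s = m + 2" using m(2) by (metis mult_left_cancel neq0_conv)
  thus ?thesis using m(1) by (simp add: N_def s_def)
qed

lemma card_square_values_dependent:
  fixes L1 L2 R1 R2 :: 'b
  assumes K: "L1 \<in> subF q" "L2 \<in> subF q" "R1 \<in> subF q" "R2 \<in> subF q"
    and det: "L2 * R1 - L1 * R2 = 0" and L_nonzero: "L1 + \<epsilon> * L2 \<noteq> 0"
  defines "L \<equiv> L1 + \<epsilon> * L2" and "R \<equiv> R1 + \<epsilon> * R2"
  shows "card {y \<in> subF q. y * L + R \<noteq> 0 \<and> (\<exists>t. t ^ 2 = y * L + R)}
           = (if \<exists>t. t ^ 2 = L then q - 1 else 0)"
proof -
  obtain r where r: "r \<in> subF q" "R = r * L"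
  proof (cases "L2 = 0")
    case True
    hence "L1 \<noteq> 0" "R2 = 0" using L_nonzero det by auto
    thus ?thesis using that[of "R1 / L1"] True K by (simp add: L_def R_def subF_divide)
  next
    case False
    hence "R1 = (R2 / L2) * L1" using det by (simp add: field_simps)
    thus ?thesis using that[of "R2 / L2"] False K by (simp add: L_def R_def subF_divide algebra_simps)
  qed
  have "y * L + R \<noteq> 0 \<and> (\<exists>t. t ^ 2 = y * L + R) \<longleftrightarrow> y \<noteq> - r \<and> (\<exists>t. t ^ 2 = L)"
    if "y \<in> subF q" for y
  proof -
    have "y * L + R = (y + r) * L" using r by (simp add: algebra_simps)
    moreover have "y + r \<noteq> 0 \<longleftrightarrow> y \<noteq> - r" by (simp add: eq_neg_iff_add_eq_0)
    ultimately show ?thesis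
      using ex_square_subF_mult_iff[of "y + r" L] subF_add[OF that r(1)] L_nonzero by (auto simp: L_def)
  qed
  hence "{y \<in> subF q. y * L + R \<noteq> 0 \<and> (\<exists>t. t ^ 2 = y * L + R)}
           = (if \<exists>t. t ^ 2 = L then subF q - {- r} else {})" by auto
  thus ?thesis using card_subF r(1) subF_uminus by (simp add: card_Diff_singleton)
qed

end

section \<open>Tangents of the conic through a point\<close>

definition scale3 :: "'a::field \<Rightarrow> 'a \<times> 'a \<times> 'a \<Rightarrow> 'a \<times> 'a \<times> 'a" where
  "scale3 l v = (l * fst v, l * fst (snd v), l * snd (snd v))"

definition dot3 :: "'a::field \<times> 'a \<times> 'a \<Rightarrow> 'a \<times> 'a \<times> 'a \<Rightarrow> 'a" where
  "dot3 u v = fst u * fst v + fst (snd u) * fst (snd v) + snd (snd u) * snd (snd v)"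

lemma self_in_pclass3: "v \<in> pclass3 UNIV v"
  unfolding pclass3_def by (rule CollectI, rule exI[of _ 1]) simp

lemma mem_pclass3_iff: "x \<in> pclass3 UNIV v \<longleftrightarrow> (\<exists>l. l \<noteq> 0 \<and> x = scale3 l v)"
  unfolding pclass3_def scale3_def by blast

lemma pclass3_eq_imp_scale3:
  "pclass3 UNIV v = pclass3 UNIV w \<Longrightarrow> \<exists>l. l \<noteq> 0 \<and> v = scale3 l w"
proof -
  assume "pclass3 UNIV v = pclass3 UNIV w"
  hence "v \<in> pclass3 UNIV w" using self_in_pclass3[of v] by simp
  thus ?thesis by (simp add: mem_pclass3_iff)
qed

lemma pclass3_scale3:
  assumes "l \<noteq> 0"
  shows "pclass3 UNIV (scale3 l w) = pclass3 UNIV w"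
proof (intro equalityI subsetI)
  fix x assume "x \<in> pclass3 UNIV (scale3 l w)"
  then obtain m where "m \<noteq> 0" "x = scale3 m (scale3 l w)" by (auto simp: mem_pclass3_iff)
  thus "x \<in> pclass3 UNIV w" using assms
    by (auto simp: mem_pclass3_iff scale3_def intro!: exI[of _ "m * l"])
next
  fix x assume "x \<in> pclass3 UNIV w"
  then obtain m where "m \<noteq> 0" "x = scale3 m w" by (auto simp: mem_pclass3_iff)
  thus "x \<in> pclass3 UNIV (scale3 l w)" using assms
    by (auto simp: mem_pclass3_iff scale3_def intro!: exI[of _ "m / l"])
qed

lemma incident_pclass3_iff: "incident (pclass3 UNIV p) (pclass3 UNIV n) \<longleftrightarrow> dot3 n p = 0"
proof
  assume "incident (pclass3 UNIV p) (pclass3 UNIV n)"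
  then obtain v u where "v \<in> pclass3 UNIV p" "u \<in> pclass3 UNIV n" "dot3 u v = 0"
    unfolding incident_def dot3_def by blast
  then obtain l m where "l \<noteq> 0" "m \<noteq> 0" "dot3 (scale3 m n) (scale3 l p) = 0"
    by (auto simp: mem_pclass3_iff)
  moreover have "dot3 (scale3 m n) (scale3 l p) = (m * l) * dot3 n p"
    by (simp add: dot3_def scale3_def algebra_simps)
  ultimately show "dot3 n p = 0" by simp
next
  assume "dot3 n p = 0"
  thus "incident (pclass3 UNIV p) (pclass3 UNIV n)"
    unfolding incident_def dot3_def using self_in_pclass3[of p] self_in_pclass3[of n] by blast
qed

lemma conicGrad_scale3: "conicGrad a b c d e (scale3 l v) = scale3 l (conicGrad a b c d e v)"
  by (cases v) (simp add: conicGrad_def scale3_def distrib_left mult.left_commute)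

lemma conicGrad_eq_scale3_imp:
  assumes "conic_nonsingular a b c d e"
    and "conicGrad a b c d e v = scale3 l (conicGrad a b c d e w)"
  shows "v = scale3 l w"
proof -
  have "conicGrad a b c d e (fst v - l * fst w, fst (snd v) - l * fst (snd w), snd (snd v) - l * snd (snd w))
      = (0, 0, 0)"
    using assms(2) by (cases v, cases w) (simp add: conicGrad_def scale3_def algebra_simps)
  hence "(fst v - l * fst w, fst (snd v) - l * fst (snd w), snd (snd v) - l * snd (snd w)) = (0, 0, 0)"
    using assms(1) unfolding conic_nonsingular_def by (metis (no_types))
  thus ?thesis by (simp add: scale3_def prod_eq_iff)
qed

definition proportional :: "'a::field \<times> 'a \<Rightarrow> 'a \<times> 'a \<Rightarrow> bool" where
  "proportional u v \<longleftrightarrow> (\<exists>m. u = (m * fst v, m * snd v))"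

definition binary_quadratic_zeros :: "'a::field \<Rightarrow> 'a \<Rightarrow> 'a \<Rightarrow> ('a \<times> 'a) set" where
  "binary_quadratic_zeros \<alpha> \<beta> \<gamma> =
     {u. u \<noteq> (0, 0) \<and> \<alpha> * fst u ^ 2 + \<beta> * fst u * snd u + \<gamma> * snd u ^ 2 = 0}"

lemma cross_eq_imp_proportional:
  fixes x0 y0 s t :: "'a::field"
  assumes "y0 \<noteq> 0" "y0 * s = x0 * t"
  shows "proportional (s, t) (x0, y0)"
  unfolding proportional_def using assms by (intro exI[of _ "t / y0"]) (simp add: field_simps)

lemma four_mult_binary_quadratic_eq:
  fixes \<alpha> \<beta> \<gamma> s t :: "'a::field"
  shows "4 * \<alpha> * (\<alpha> * s ^ 2 + \<beta> * s * t + \<gamma> * t ^ 2)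
    = (2 * \<alpha> * s + \<beta> * t) ^ 2 - (\<beta> ^ 2 - 4 * \<alpha> * \<gamma>) * t ^ 2"
  by (simp add: algebra_simps power2_eq_square)

lemma binary_quadratic_zeros_proportional_to_one:
  fixes \<alpha> \<beta> \<gamma> :: "'a::field"
  assumes two: "(2::'a) \<noteq> 0" and nonzero: "\<not> (\<alpha> = 0 \<and> \<beta> = 0 \<and> \<gamma> = 0)"
    and disc: "\<not> (\<beta> ^ 2 - 4 * \<alpha> * \<gamma> \<noteq> 0 \<and> (\<exists>d. d ^ 2 = \<beta> ^ 2 - 4 * \<alpha> * \<gamma>))"
  shows "\<exists>r. \<forall>u \<in> binary_quadratic_zeros \<alpha> \<beta> \<gamma>. proportional u r"
proof (cases "\<alpha> = 0")
  case True
  hence "\<beta> = 0" using disc by auto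
  hence "\<gamma> \<noteq> 0" using nonzero True by simp
  have "proportional u (1, 0)" if "u \<in> binary_quadratic_zeros \<alpha> \<beta> \<gamma>" for u
    using that True \<open>\<beta> = 0\<close> \<open>\<gamma> \<noteq> 0\<close>
    by (cases u) (auto simp: binary_quadratic_zeros_def proportional_def)
  thus ?thesis by blast
next
  case False
  have "proportional u (- \<beta>, 2 * \<alpha>)" if u: "u \<in> binary_quadratic_zeros \<alpha> \<beta> \<gamma>" for u
  proof -
    obtain s t where st: "u = (s, t)" by (cases u)
    have sq: "(2 * \<alpha> * s + \<beta> * t) ^ 2 = (\<beta> ^ 2 - 4 * \<alpha> * \<gamma>) * t ^ 2"
      using four_mult_binary_quadratic_eq[of \<alpha> s \<beta> t \<gamma>] u st by (simp add: binary_quadratic_zeros_def)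
    have "t \<noteq> 0"
    proof
      assume "t = 0"
      hence "s = 0" using sq False two by simp
      thus False using u st \<open>t = 0\<close> by (simp add: binary_quadratic_zeros_def)
    qed
    hence "((2 * \<alpha> * s + \<beta> * t) / t) ^ 2 = \<beta> ^ 2 - 4 * \<alpha> * \<gamma>" using sq by (simp add: power_divide)
    hence "\<beta> ^ 2 - 4 * \<alpha> * \<gamma> = 0" using disc by blast
    hence "(2 * \<alpha>) * s = - \<beta> * t" using sq by (simp add: eq_neg_iff_add_eq_0)
    thus ?thesis unfolding st using False two by (intro cross_eq_imp_proportional) simp_all
  qed
  thus ?thesis by blast
qed

lemma mem_binary_quadratic_zeros_iff:
  fixes \<alpha> \<beta> \<gamma> d :: "'a::field"
  assumes two: "(2::'a) \<noteq> 0" and "\<alpha> \<noteq> 0" and d: "d ^ 2 = \<beta> ^ 2 - 4 * \<alpha> * \<gamma>"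
  shows "(s, t) \<in> binary_quadratic_zeros \<alpha> \<beta> \<gamma> \<longleftrightarrow> (s, t) \<noteq> (0, 0) \<and>
    (2 * \<alpha> * s = (d - \<beta>) * t \<or> 2 * \<alpha> * s = (- d - \<beta>) * t)"
proof -
  have "(4::'a) \<noteq> 0" using two by (metis mult_eq_0_iff num_double numeral_times_numeral)
  have "\<alpha> * s ^ 2 + \<beta> * s * t + \<gamma> * t ^ 2 = 0 \<longleftrightarrow> 4 * \<alpha> * (\<alpha> * s ^ 2 + \<beta> * s * t + \<gamma> * t ^ 2) = 0"
    using \<open>\<alpha> \<noteq> 0\<close> \<open>(4::'a) \<noteq> 0\<close> by simp
  also have "4 * \<alpha> * (\<alpha> * s ^ 2 + \<beta> * s * t + \<gamma> * t ^ 2)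
      = (2 * \<alpha> * s - (d - \<beta>) * t) * (2 * \<alpha> * s - (- d - \<beta>) * t)"
    unfolding four_mult_binary_quadratic_eq d[symmetric] by (simp add: algebra_simps power2_eq_square)
  also have "\<dots> = 0 \<longleftrightarrow> 2 * \<alpha> * s = (d - \<beta>) * t \<or> 2 * \<alpha> * s = (- d - \<beta>) * t" by simp
  finally show ?thesis by (simp add: binary_quadratic_zeros_def)
qed

lemma binary_quadratic_zeros_proportional_to_two:
  fixes \<alpha> \<beta> \<gamma> d :: "'a::field"
  assumes two: "(2::'a) \<noteq> 0" and d: "d ^ 2 = \<beta> ^ 2 - 4 * \<alpha> * \<gamma>" "d \<noteq> 0"
  shows "\<exists>r1 r2. r1 \<in> binary_quadratic_zeros \<alpha> \<beta> \<gamma> \<and> r2 \<in> binary_quadratic_zeros \<alpha> \<beta> \<gamma> \<and>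
    \<not> proportional r1 r2 \<and> (\<forall>u \<in> binary_quadratic_zeros \<alpha> \<beta> \<gamma>. proportional u r1 \<or> proportional u r2)"
proof (cases "\<alpha> = 0")
  case True
  hence "\<beta> \<noteq> 0" using d by auto
  have "(1, 0) \<in> binary_quadratic_zeros \<alpha> \<beta> \<gamma>" "(- \<gamma>, \<beta>) \<in> binary_quadratic_zeros \<alpha> \<beta> \<gamma>"
    using True \<open>\<beta> \<noteq> 0\<close> by (simp_all add: binary_quadratic_zeros_def power2_eq_square)
  moreover have "\<not> proportional (1, 0) (- \<gamma>, \<beta>)" using \<open>\<beta> \<noteq> 0\<close> by (simp add: proportional_def)
  moreover have "proportional u (1, 0) \<or> proportional u (- \<gamma>, \<beta>)"
    if "u \<in> binary_quadratic_zeros \<alpha> \<beta> \<gamma>" for u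
  proof -
    obtain s t where st: "u = (s, t)" by (cases u)
    have "t * (\<beta> * s + \<gamma> * t) = 0"
      using that st True by (simp add: binary_quadratic_zeros_def algebra_simps power2_eq_square)
    hence "t = 0 \<or> \<beta> * s = - \<gamma> * t" by (auto simp: eq_neg_iff_add_eq_0)
    thus ?thesis
    proof
      assume "t = 0"
      thus ?thesis unfolding st by (simp add: proportional_def)
    next
      assume "\<beta> * s = - \<gamma> * t"
      thus ?thesis unfolding st using \<open>\<beta> \<noteq> 0\<close> by (simp add: cross_eq_imp_proportional)
    qed
  qed
  ultimately show ?thesis by blast
next
  case False
  note zero_iff = mem_binary_quadratic_zeros_iff[OF two False d(1)]
  have "(d - \<beta>, 2 * \<alpha>) \<in> binary_quadratic_zeros \<alpha> \<beta> \<gamma>" "(- d - \<beta>, 2 * \<alpha>) \<in> binary_quadratic_zeros \<alpha> \<beta> \<gamma>"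
    using False two by (simp_all add: zero_iff)
  moreover have "\<not> proportional (d - \<beta>, 2 * \<alpha>) (- d - \<beta>, 2 * \<alpha>)"
  proof
    assume "proportional (d - \<beta>, 2 * \<alpha>) (- d - \<beta>, 2 * \<alpha>)"
    then obtain m where m: "d - \<beta> = m * (- d - \<beta>)" "2 * \<alpha> = m * (2 * \<alpha>)" by (auto simp: proportional_def)
    hence "m = 1" using False two by simp
    hence "2 * d = 0" using m by (simp add: algebra_simps)
    thus False using d two by simp
  qed
  moreover have "proportional u (d - \<beta>, 2 * \<alpha>) \<or> proportional u (- d - \<beta>, 2 * \<alpha>)"
    if "u \<in> binary_quadratic_zeros \<alpha> \<beta> \<gamma>" for u
    using that False two cross_eq_imp_proportional[of "2 * \<alpha>"] by (cases u) (auto simp: zero_iff)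
  ultimately show ?thesis by blast
qed

lemma card_image_binary_quadratic_zeros_eq_2_iff:
  fixes \<alpha> \<beta> \<gamma> :: "'a::field" and h :: "'a \<times> 'a \<Rightarrow> 'x"
  assumes two: "(2::'a) \<noteq> 0" and nonzero: "\<not> (\<alpha> = 0 \<and> \<beta> = 0 \<and> \<gamma> = 0)"
    and h_inj: "\<And>u v. u \<noteq> (0, 0) \<Longrightarrow> v \<noteq> (0, 0) \<Longrightarrow> h u = h v \<Longrightarrow> proportional u v"
    and h_scale: "\<And>u m. m \<noteq> 0 \<Longrightarrow> h (m * fst u, m * snd u) = h u"
  shows "card (h ` binary_quadratic_zeros \<alpha> \<beta> \<gamma>) = 2
    \<longleftrightarrow> \<beta> ^ 2 - 4 * \<alpha> * \<gamma> \<noteq> 0 \<and> (\<exists>d. d ^ 2 = \<beta> ^ 2 - 4 * \<alpha> * \<gamma>)"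
proof -
  let ?Z = "binary_quadratic_zeros \<alpha> \<beta> \<gamma>"
  have h_eq: "h u = h r" if u: "u \<in> ?Z" and "proportional u r" for u r
  proof -
    obtain m where "u = (m * fst r, m * snd r)" using \<open>proportional u r\<close> by (auto simp: proportional_def)
    moreover from this have "m \<noteq> 0" using u by (auto simp: binary_quadratic_zeros_def)
    ultimately show ?thesis using h_scale by simp
  qed
  show ?thesis
  proof
    assume card_2: "card (h ` ?Z) = 2"
    show "\<beta> ^ 2 - 4 * \<alpha> * \<gamma> \<noteq> 0 \<and> (\<exists>d. d ^ 2 = \<beta> ^ 2 - 4 * \<alpha> * \<gamma>)"
    proof (rule ccontr)
      assume "\<not> ?thesis"
      then obtain r where "\<forall>u \<in> ?Z. proportional u r"
        using binary_quadratic_zeros_proportional_to_one[OF two nonzero] by blast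
      hence "h ` ?Z \<subseteq> {h r}" using h_eq by blast
      hence "card (h ` ?Z) \<le> 1" using card_mono[of "{h r}"] by simp
      thus False using card_2 by simp
    qed
  next
    assume "\<beta> ^ 2 - 4 * \<alpha> * \<gamma> \<noteq> 0 \<and> (\<exists>d. d ^ 2 = \<beta> ^ 2 - 4 * \<alpha> * \<gamma>)"
    then obtain d where "d ^ 2 = \<beta> ^ 2 - 4 * \<alpha> * \<gamma>" "d \<noteq> 0" by force
    then obtain r1 r2 where r: "r1 \<in> ?Z" "r2 \<in> ?Z" "\<not> proportional r1 r2"
      "\<forall>u \<in> ?Z. proportional u r1 \<or> proportional u r2"
      using binary_quadratic_zeros_proportional_to_two[OF two] by blast
    have "h ` ?Z = {h r1, h r2}" using r h_eq by blast
    moreover have "r1 \<noteq> (0, 0)" "r2 \<noteq> (0, 0)" using r(1,2) by (simp_all add: binary_quadratic_zeros_def)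
    hence "h r1 \<noteq> h r2" using r(3) h_inj by blast
    ultimately show "card (h ` ?Z) = 2" by simp
  qed
qed

text \<open>For \<open>d = 1\<close> the conic reads \<open>y (b x + z) = - (a x\<^sup>2 + c x z + e z\<^sup>2)\<close>; projecting from
  its point \<open>(0 : 1 : 0)\<close> parametrises it by \<open>(x : z) \<in> PG(1)\<close>.\<close>
definition conic_param :: "'a::field \<Rightarrow> 'a \<Rightarrow> 'a \<Rightarrow> 'a \<Rightarrow> 'a \<times> 'a \<Rightarrow> 'a \<times> 'a \<times> 'a" where
  "conic_param a b c e u = (fst u * (b * fst u + snd u),
     - (a * fst u ^ 2 + c * fst u * snd u + e * snd u ^ 2), snd u * (b * fst u + snd u))"

lemma conicF_conic_param: "conicF a b c 1 e (conic_param a b c e u) = 0"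
  by (cases u) (simp add: conicF_def conic_param_def algebra_simps power2_eq_square)

lemma conic_param_scale:
  "conic_param a b c e (l * fst u, l * snd u) = scale3 (l ^ 2) (conic_param a b c e u)"
  by (cases u) (simp add: conic_param_def scale3_def algebra_simps power2_eq_square)

lemma conic_param_nonzero:
  assumes \<Delta>: "- b * c * 1 + a * 1 ^ 2 + b ^ 2 * e \<noteq> 0" and u: "u \<noteq> (0, 0)"
  shows "conic_param a b c e u \<noteq> (0, 0, 0)"
proof
  assume zero: "conic_param a b c e u = (0, 0, 0)"
  obtain s t where st: "u = (s, t)" by (cases u)
  with zero u have "b * s + t = 0" by (auto simp: conic_param_def)
  hence "t = - b * s" by (simp add: eq_neg_iff_add_eq_0 add.commute)
  moreover have "- (a * s ^ 2 + c * s * t + e * t ^ 2) = 0" using zero st unfolding conic_param_def by simp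
  hence "a * s ^ 2 + c * s * t + e * t ^ 2 = 0" by (simp only: neg_equal_0_iff_equal)
  ultimately have "s ^ 2 * (- b * c * 1 + a * 1 ^ 2 + b ^ 2 * e) = 0"
    by (simp add: algebra_simps power2_eq_square)
  thus False using \<Delta> u st \<open>t = - b * s\<close> by simp
qed

lemma conic_point_eq_scale3_conic_param:
  assumes \<Delta>: "- b * c * 1 + a * 1 ^ 2 + b ^ 2 * e \<noteq> 0"
    and v: "v \<noteq> (0, 0, 0)" "conicF a b c 1 e v = 0"
  shows "\<exists>u l. u \<noteq> (0, 0) \<and> l \<noteq> 0 \<and> v = scale3 l (conic_param a b c e u)"
proof -
  obtain x y z where xyz: "v = (x, y, z)" by (cases v)
  show ?thesis
  proof (cases "b * x + z = 0")
    case True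
    hence z: "z = - b * x" by (simp add: eq_neg_iff_add_eq_0 add.commute)
    have "x ^ 2 * (- b * c * 1 + a * 1 ^ 2 + b ^ 2 * e) = 0" using v(2) xyz z
      by (simp add: conicF_def algebra_simps power2_eq_square)
    hence "x = 0" using \<Delta> by simp
    hence "y \<noteq> 0" using v xyz z by simp
    define \<delta> where "\<delta> = - b * c * 1 + a * 1 ^ 2 + b ^ 2 * e"
    have "conic_param a b c e (1, - b) = (0, - \<delta>, 0)"
      by (simp add: conic_param_def \<delta>_def algebra_simps power2_eq_square)
    moreover have "\<delta> \<noteq> 0" using \<Delta> by (simp add: \<delta>_def)
    ultimately have "v = scale3 (- y / \<delta>) (conic_param a b c e (1, - b))"
      using xyz \<open>x = 0\<close> z by (simp add: scale3_def)
    thus ?thesis using \<open>y \<noteq> 0\<close> \<Delta> by (intro exI[of _ "(1, - b)"] exI[of _ "- y / \<delta>"]) (simp add: \<delta>_def)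
  next
    case False
    have "conicF a b c 1 e v = y * (b * x + z) + (a * x ^ 2 + c * x * z + e * z ^ 2)"
      using xyz by (simp add: conicF_def algebra_simps power2_eq_square)
    hence "y * (b * x + z) = - (a * x ^ 2 + c * x * z + e * z ^ 2)"
      using v(2) by (simp only: eq_neg_iff_add_eq_0)
    hence "conic_param a b c e (x, z) = scale3 (b * x + z) v"
      using xyz by (simp add: conic_param_def scale3_def mult.commute)
    hence "v = scale3 (1 / (b * x + z)) (conic_param a b c e (x, z))"
      using False xyz by (simp add: scale3_def)
    thus ?thesis using False by (intro exI[of _ "(x, z)"] exI[of _ "1 / (b * x + z)"]) auto
  qed
qed

lemma conic_param_eq_scale3_imp:
  assumes u: "u \<noteq> (0, 0)" and u': "u' \<noteq> (0, 0)" and l: "l \<noteq> 0"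
    and eq: "conic_param a b c e u = scale3 l (conic_param a b c e u')"
  shows "proportional u u'"
proof -
  obtain s t s' t' where st: "u = (s, t)" "u' = (s', t')" by (cases u, cases u')
  define L L' where "L = b * s + t" and "L' = b * s' + t'"
  have e: "s * L = l * (s' * L')" "t * L = l * (t' * L')"
    using eq st by (simp_all add: conic_param_def scale3_def L_def L'_def)
  show ?thesis
  proof (cases "L = 0")
    case False
    hence "s = (l * L' / L) * s'" "t = (l * L' / L) * t'" using e by (simp_all add: field_simps)
    thus ?thesis using st unfolding proportional_def by (intro exI[of _ "l * L' / L"]) simp
  next
    case True
    hence "L' = 0" using e l u' st by auto
    hence "s' \<noteq> 0" "t' = - b * s'" "t = - b * s"
      using True u' st by (auto simp: L_def L'_def eq_neg_iff_add_eq_0 add.commute)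
    hence "s = (s / s') * s'" "t = (s / s') * t'" by simp_all
    thus ?thesis using st unfolding proportional_def by (intro exI[of _ "s / s'"]) simp
  qed
qed

lemma dot3_conicGrad_commute: "dot3 (conicGrad a b c d e v) w = dot3 v (conicGrad a b c d e w)"
  by (cases v, cases w) (simp add: dot3_def conicGrad_def algebra_simps)

lemma dot3_conic_param:
  "dot3 (conic_param a b c e u) (n1, n2, n3) = (b * n1 - a * n2) * fst u ^ 2
     + (n1 - c * n2 + b * n3) * fst u * snd u + (n3 - e * n2) * snd u ^ 2"
  by (simp add: dot3_def conic_param_def algebra_simps power2_eq_square)

lemma tangent_form_discriminant:
  assumes "conicGrad a b c 1 e p = (n1, n2, n3)"
  shows "(n1 - c * n2 + b * n3) ^ 2 - 4 * (b * n1 - a * n2) * (n3 - e * n2)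
    = 4 * (- b * c * 1 + a * 1 ^ 2 + b ^ 2 * e) * conicF a b c 1 e p"
  using assms by (cases p) (auto simp: conicGrad_def conicF_def algebra_simps power2_eq_square)

lemma tangent_form_nonzero:
  assumes ns: "conic_nonsingular a b c 1 e" and \<Delta>: "- b * c * 1 + a * 1 ^ 2 + b ^ 2 * e \<noteq> 0"
    and p: "p \<noteq> (0, 0, 0)" and n: "conicGrad a b c 1 e p = (n1, n2, n3)"
  shows "\<not> (b * n1 - a * n2 = 0 \<and> n1 - c * n2 + b * n3 = 0 \<and> n3 - e * n2 = 0)"
proof
  assume zero: "b * n1 - a * n2 = 0 \<and> n1 - c * n2 + b * n3 = 0 \<and> n3 - e * n2 = 0"
  hence n3: "n3 = e * n2" by simp
  have n1: "n1 = c * n2 - b * (e * n2)" using zero unfolding n3 by (simp add: algebra_simps)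
  have "b * n1 - a * n2 = - (- b * c * 1 + a * 1 ^ 2 + b ^ 2 * e) * n2"
    unfolding n1 by (simp add: algebra_simps power2_eq_square)
  hence "- (- b * c * 1 + a * 1 ^ 2 + b ^ 2 * e) * n2 = 0" using zero by metis
  hence "n2 = 0" using \<Delta> by (simp only: mult_eq_0_iff neg_equal_0_iff_equal) blast
  hence "conicGrad a b c 1 e p = (0, 0, 0)" using n n1 n3 by simp
  thus False using ns p unfolding conic_nonsingular_def by (metis (no_types))
qed

lemma tangents_through_eq_image:
  assumes \<Delta>: "- b * c * 1 + a * 1 ^ 2 + b ^ 2 * e \<noteq> 0"
  shows "{lin \<in> tangent_lines a b c 1 e. incident (pclass3 UNIV p) lin}
    = (\<lambda>u. pclass3 UNIV (conicGrad a b c 1 e (conic_param a b c e u))) `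
        {u. u \<noteq> (0, 0) \<and> dot3 (conic_param a b c e u) (conicGrad a b c 1 e p) = 0}"
proof (intro equalityI subsetI)
  fix lin assume "lin \<in> {lin \<in> tangent_lines a b c 1 e. incident (pclass3 UNIV p) lin}"
  then obtain v where v: "v \<noteq> (0, 0, 0)" "conicF a b c 1 e v = 0"
      "lin = pclass3 UNIV (conicGrad a b c 1 e v)"
    and incident: "incident (pclass3 UNIV p) lin" unfolding tangent_lines_def by blast
  obtain u l where ul: "u \<noteq> (0, 0)" "l \<noteq> 0" "v = scale3 l (conic_param a b c e u)"
    using conic_point_eq_scale3_conic_param[OF \<Delta> v(1,2)] by blast
  have lin: "lin = pclass3 UNIV (conicGrad a b c 1 e (conic_param a b c e u))"
    using v(3) ul by (simp add: conicGrad_scale3 pclass3_scale3)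
  hence "dot3 (conic_param a b c e u) (conicGrad a b c 1 e p) = 0"
    using incident by (simp add: incident_pclass3_iff dot3_conicGrad_commute)
  thus "lin \<in> (\<lambda>u. pclass3 UNIV (conicGrad a b c 1 e (conic_param a b c e u))) `
        {u. u \<noteq> (0, 0) \<and> dot3 (conic_param a b c e u) (conicGrad a b c 1 e p) = 0}"
    using lin ul(1) by blast
next
  fix lin assume "lin \<in> (\<lambda>u. pclass3 UNIV (conicGrad a b c 1 e (conic_param a b c e u))) `
        {u. u \<noteq> (0, 0) \<and> dot3 (conic_param a b c e u) (conicGrad a b c 1 e p) = 0}"
  then obtain u where u: "u \<noteq> (0, 0)" "dot3 (conic_param a b c e u) (conicGrad a b c 1 e p) = 0"
    and lin: "lin = pclass3 UNIV (conicGrad a b c 1 e (conic_param a b c e u))" by blast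
  have "lin \<in> tangent_lines a b c 1 e"
    unfolding tangent_lines_def lin using conic_param_nonzero[OF \<Delta> u(1)] conicF_conic_param by blast
  moreover have "incident (pclass3 UNIV p) lin"
    unfolding lin incident_pclass3_iff dot3_conicGrad_commute using u(2) .
  ultimately show "lin \<in> {lin \<in> tangent_lines a b c 1 e. incident (pclass3 UNIV p) lin}" by blast
qed

lemma tangent_eq_imp_proportional:
  assumes ns: "conic_nonsingular a b c 1 e" and "u \<noteq> (0, 0)" "v \<noteq> (0, 0)"
    and "pclass3 UNIV (conicGrad a b c 1 e (conic_param a b c e u))
      = pclass3 UNIV (conicGrad a b c 1 e (conic_param a b c e v))"
  shows "proportional u v"
proof -
  obtain l where l: "l \<noteq> 0"
    "conicGrad a b c 1 e (conic_param a b c e u) = scale3 l (conicGrad a b c 1 e (conic_param a b c e v))"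
    using pclass3_eq_imp_scale3[OF assms(4)] by blast
  hence "conic_param a b c e u = scale3 l (conic_param a b c e v)"
    using conicGrad_eq_scale3_imp[OF ns] by blast
  thus ?thesis by (rule conic_param_eq_scale3_imp[OF assms(2,3) l(1)])
qed

lemma card_tangents_through_eq_2_iff:
  fixes a b c e :: "'a::field"
  assumes two: "(2::'a) \<noteq> 0" and ns: "conic_nonsingular a b c 1 e"
    and \<Delta>: "- b * c * 1 + a * 1 ^ 2 + b ^ 2 * e \<noteq> 0"
    and \<Delta>_square: "\<exists>s. s ^ 2 = - b * c * 1 + a * 1 ^ 2 + b ^ 2 * e"
    and p: "p \<noteq> (0, 0, 0)"
  shows "card {lin \<in> tangent_lines a b c 1 e. incident (pclass3 UNIV p) lin} = 2
    \<longleftrightarrow> conicF a b c 1 e p \<noteq> 0 \<and> (\<exists>t. t ^ 2 = conicF a b c 1 e p)"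
proof -
  obtain n1 n2 n3 where n: "conicGrad a b c 1 e p = (n1, n2, n3)" by (cases "conicGrad a b c 1 e p") auto
  define h where "h u = pclass3 UNIV (conicGrad a b c 1 e (conic_param a b c e u))" for u
  have tangents: "{lin \<in> tangent_lines a b c 1 e. incident (pclass3 UNIV p) lin}
    = h ` binary_quadratic_zeros (b * n1 - a * n2) (n1 - c * n2 + b * n3) (n3 - e * n2)"
    unfolding tangents_through_eq_image[OF \<Delta>] h_def binary_quadratic_zeros_def n dot3_conic_param ..
  have h_scale: "h (m * fst u, m * snd u) = h u" if "m \<noteq> 0" for u m
    unfolding h_def conic_param_scale conicGrad_scale3 using that by (simp add: pclass3_scale3)
  have h_inj: "proportional u v" if "u \<noteq> (0, 0)" "v \<noteq> (0, 0)" "h u = h v" for u v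
    using tangent_eq_imp_proportional[OF ns that(1,2)] that(3) by (simp add: h_def)
  obtain r where r: "r ^ 2 = - b * c * 1 + a * 1 ^ 2 + b ^ 2 * e" using \<Delta>_square by blast
  hence "2 * r \<noteq> 0" using two \<Delta> by auto
  have disc: "(n1 - c * n2 + b * n3) ^ 2 - 4 * (b * n1 - a * n2) * (n3 - e * n2)
      = (2 * r) ^ 2 * conicF a b c 1 e p"
    unfolding tangent_form_discriminant[OF n] r[symmetric] by (simp add: power_mult_distrib)
  have "card (h ` binary_quadratic_zeros (b * n1 - a * n2) (n1 - c * n2 + b * n3) (n3 - e * n2)) = 2
    \<longleftrightarrow> (2 * r) ^ 2 * conicF a b c 1 e p \<noteq> 0 \<and> (\<exists>d. d ^ 2 = (2 * r) ^ 2 * conicF a b c 1 e p)"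
    unfolding disc[symmetric] using tangent_form_nonzero[OF ns \<Delta> p n]
    by (rule card_image_binary_quadratic_zeros_eq_2_iff[where h = h, OF two _ h_inj h_scale])
  also have "\<dots> \<longleftrightarrow> conicF a b c 1 e p \<noteq> 0 \<and> (\<exists>t. t ^ 2 = conicF a b c 1 e p)"
    using ex_square_eq_square_mult_iff[OF \<open>2 * r \<noteq> 0\<close>, of "conicF a b c 1 e p"] \<open>2 * r \<noteq> 0\<close>
    by (metis mult_eq_0_iff power_not_zero)
  finally show ?thesis unfolding tangents .
qed

section \<open>Counting the points on two tangents\<close>

definition P1_reps :: "'a::field set \<Rightarrow> ('a \<times> 'a) set" where
  "P1_reps K = (\<lambda>z. (1, z)) ` K \<union> {(0, 1)}"

text \<open>Normalised representatives of \<open>PG(2)\<close>, grouped by the lines through \<open>(0 : 1 : 0)\<close>.\<close>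
definition P2_reps :: "'a::field set \<Rightarrow> ('a \<times> 'a \<times> 'a) set" where
  "P2_reps K = (\<lambda>(u, y). (fst u, y, snd u)) ` (P1_reps K \<times> K) \<union> {(0, 1, 0)}"

lemma card_P1_reps: "finite K \<Longrightarrow> card (P1_reps K) = card K + 1"
  unfolding P1_reps_def by (subst card_Un_disjoint) (auto simp: card_image inj_on_def)

lemma P1_reps_nonzero: "u \<in> P1_reps K \<Longrightarrow> u \<noteq> (0, 0)"
  unfolding P1_reps_def by auto

lemma P1_reps_in: "0 \<in> K \<Longrightarrow> 1 \<in> K \<Longrightarrow> u \<in> P1_reps K \<Longrightarrow> fst u \<in> K \<and> snd u \<in> K"
  unfolding P1_reps_def by auto

lemma mem_P2_repsI: "u \<in> P1_reps K \<Longrightarrow> y \<in> K \<Longrightarrow> (fst u, y, snd u) \<in> P2_reps K"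
  unfolding P2_reps_def by force

lemma P2_reps_nonzero: "r \<in> P2_reps K \<Longrightarrow> r \<noteq> (0, 0, 0)"
  unfolding P2_reps_def P1_reps_def by auto

lemma inj_on_pclass3_P2_reps: "inj_on (pclass3 UNIV) (P2_reps K)"
proof (rule inj_onI)
  fix r r' assume "r \<in> P2_reps K" "r' \<in> P2_reps K" "pclass3 UNIV r = pclass3 UNIV r'"
  moreover from this obtain l where "r = scale3 l r'" using pclass3_eq_imp_scale3 by blast
  ultimately show "r = r'" unfolding P2_reps_def P1_reps_def scale3_def by auto
qed

lemma card_P1_reps_cubic_zeros_le_3:
  fixes cA cB cC cD :: "'a::field"
  assumes "\<not> (cA = 0 \<and> cB = 0 \<and> cC = 0 \<and> cD = 0)"
  shows "card {u \<in> P1_reps K.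
    cA * fst u ^ 3 + cB * fst u ^ 2 * snd u + cC * fst u * snd u ^ 2 + cD * snd u ^ 3 = 0} \<le> 3"
proof -
  let ?p = "[:cA, cB, cC, cD:]"
  define Z where "Z = {z. poly ?p z = 0}"
  define I :: "('a \<times> 'a) set" where "I = (if cD = 0 then {(0, 1)} else {})"
  have "?p \<noteq> 0" using assms by auto
  hence "card Z \<le> degree ?p" "finite Z"
    unfolding Z_def by (rule card_poly_roots_bound, rule poly_roots_finite)
  have zeros: "{u \<in> P1_reps K. cA * fst u ^ 3 + cB * fst u ^ 2 * snd u + cC * fst u * snd u ^ 2 + cD * snd u ^ 3 = 0}
      \<subseteq> (\<lambda>z. (1, z)) ` Z \<union> I"
    by (auto simp: P1_reps_def Z_def I_def algebra_simps power2_eq_square power3_eq_cube)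
  have "card {u \<in> P1_reps K. cA * fst u ^ 3 + cB * fst u ^ 2 * snd u + cC * fst u * snd u ^ 2 + cD * snd u ^ 3 = 0}
      \<le> card ((\<lambda>z. (1, z)) ` Z \<union> I)"
    using \<open>finite Z\<close> by (intro card_mono[OF _ zeros]) (simp add: I_def)
  also have "\<dots> \<le> card ((\<lambda>z. (1::'a, z)) ` Z) + card I" by (rule card_Un_le)
  also have "\<dots> \<le> degree ?p + card I"
    using \<open>card Z \<le> degree ?p\<close> card_image_le[OF \<open>finite Z\<close>, of "\<lambda>z. (1::'a, z)"] by linarith
  also have "\<dots> \<le> 3" by (simp add: I_def degree_pCons_le)
  finally show ?thesis .
qed

context quadratic_extension
begin

lemma card_P1_reps_subF: "card (P1_reps (subF q) :: ('b \<times> 'b) set) = q + 1"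
  using card_P1_reps[of "subF q :: 'b set"] card_subF by simp

lemma P1_reps_subF_in: "u \<in> P1_reps (subF q) \<Longrightarrow> fst u \<in> subF q \<and> snd (u::'b \<times> 'b) \<in> subF q"
  using P1_reps_in subF_0 subF_1 by blast

lemma PG2_sub_eq_image_P2_reps: "PG2_sub (subF q) = pclass3 UNIV ` P2_reps (subF q :: 'b set)"
proof (intro equalityI subsetI)
  fix pt :: "('b \<times> 'b \<times> 'b) set" assume "pt \<in> PG2_sub (subF q)"
  then obtain x y z where p: "pt = pclass3 UNIV (x, y, z)" "(x, y, z) \<noteq> (0, 0, 0)"
      "x \<in> subF q" "y \<in> subF q" "z \<in> subF q"
    unfolding PG2_sub_def by auto
  consider "x \<noteq> 0" | "x = 0" "z \<noteq> 0" | "x = 0" "z = 0" "y \<noteq> 0" using p(2) by auto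
  then obtain l r where r: "l \<noteq> 0" "(x, y, z) = scale3 l r" "r \<in> P2_reps (subF q)"
  proof cases
    case 1
    have "(1, z / x) \<in> P1_reps (subF q)" using p subF_divide[of z x] by (simp add: P1_reps_def)
    from mem_P2_repsI[OF this subF_divide[OF p(4,3)]]
    have "(1, y / x, z / x) \<in> P2_reps (subF q)" by simp
    with 1 show ?thesis using that[of x "(1, y / x, z / x)"] by (simp add: scale3_def)
  next
    case 2
    have "(0, 1) \<in> P1_reps (subF q)" by (simp add: P1_reps_def)
    from mem_P2_repsI[OF this subF_divide[OF p(4,5)]]
    have "(0, y / z, 1) \<in> P2_reps (subF q)" by simp
    with 2 show ?thesis using that[of z "(0, y / z, 1)"] by (simp add: scale3_def)
  next
    case 3
    thus ?thesis using that[of y "(0, 1, 0)"] by (simp add: scale3_def P2_reps_def)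
  qed
  have "pt = pclass3 UNIV r" unfolding p(1) r(2) using pclass3_scale3[OF r(1)] .
  thus "pt \<in> pclass3 UNIV ` P2_reps (subF q)" using r(3) by blast
next
  fix pt :: "('b \<times> 'b \<times> 'b) set" assume "pt \<in> pclass3 UNIV ` P2_reps (subF q)"
  then obtain r where r: "r \<in> P2_reps (subF q)" "pt = pclass3 UNIV r" by blast
  moreover have "fst r \<in> subF q" "fst (snd r) \<in> subF q" "snd (snd r) \<in> subF q"
    using r(1) subF_0 subF_1 unfolding P2_reps_def P1_reps_def by auto
  ultimately show "pt \<in> PG2_sub (subF q)" unfolding PG2_sub_def using P2_reps_nonzero by blast
qed

lemma Eq_conic_eq_sum:
  fixes a b c e :: 'b
  assumes ns: "conic_nonsingular a b c 1 e"
    and \<Delta>: "- b * c * 1 + a * 1 ^ 2 + b ^ 2 * e \<noteq> 0"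
    and \<Delta>_square: "\<exists>s. s ^ 2 = - b * c * 1 + a * 1 ^ 2 + b ^ 2 * e"
  shows "Eq_conic q a b c 1 e = (\<Sum>u\<in>P1_reps (subF q). card {y \<in> subF q.
    conicF a b c 1 e (fst u, y, snd u) \<noteq> 0 \<and> (\<exists>t. t ^ 2 = conicF a b c 1 e (fst u, y, snd u))})"
proof -
  let ?K = "subF q :: 'b set"
  define good where "good v \<longleftrightarrow> conicF a b c 1 e v \<noteq> 0 \<and> (\<exists>t. t ^ 2 = conicF a b c 1 e v)" for v
  define \<rho> :: "('b \<times> 'b) \<times> 'b \<Rightarrow> 'b \<times> 'b \<times> 'b" where "\<rho> = (\<lambda>(u, y). (fst u, y, snd u))"
  have "card {lin \<in> tangent_lines a b c 1 e. incident (pclass3 UNIV r) lin} = 2 \<longleftrightarrow> good r"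
    if "r \<in> P2_reps ?K" for r
    using card_tangents_through_eq_2_iff[OF two_neq_zero ns \<Delta> \<Delta>_square P2_reps_nonzero[OF that]]
    by (simp add: good_def)
  hence "{pt \<in> PG2_sub ?K. card {lin \<in> tangent_lines a b c 1 e. incident pt lin} = 2}
      = pclass3 UNIV ` {r \<in> P2_reps ?K. good r}"
    unfolding PG2_sub_eq_image_P2_reps by auto
  moreover have "inj_on (pclass3 UNIV) {r \<in> P2_reps ?K. good r}"
    by (rule inj_on_subset[OF inj_on_pclass3_P2_reps]) blast
  ultimately have "Eq_conic q a b c 1 e = card {r \<in> P2_reps ?K. good r}"
    unfolding Eq_conic_def by (simp add: card_image)
  also have "{r \<in> P2_reps ?K. good r} = \<rho> ` (SIGMA u:P1_reps ?K. {y \<in> ?K. good (fst u, y, snd u)})"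
    by (auto simp: P2_reps_def \<rho>_def good_def conicF_def)
  also have "card \<dots> = (\<Sum>u\<in>P1_reps ?K. card {y \<in> ?K. good (fst u, y, snd u)})"
    by (subst card_image) (auto simp: \<rho>_def inj_on_def prod_eq_iff)
  finally show ?thesis by (simp add: good_def)
qed

lemma pclass4_subF_00_eq_imp:
  assumes "pclass4 (subF q) (0, 0, x, z) = pclass4 (subF q) (0, 0, x', z')"
  shows "\<exists>l. l \<noteq> 0 \<and> x = l * x' \<and> z = l * (z'::'b)"
proof -
  have "(0, 0, x, z) \<in> pclass4 (subF q) (0, 0, x, z)"
    unfolding pclass4_def using subF_1 by (intro CollectI exI[of _ 1]) simp
  hence "(0, 0, x, z) \<in> pclass4 (subF q) (0, 0, x', z')" using assms by simp
  thus ?thesis unfolding pclass4_def by auto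
qed

lemma pclass4_subF_00_scale:
  assumes "l \<in> subF q" "l \<noteq> 0"
  shows "pclass4 (subF q) (0, 0, l * x, l * z) = pclass4 (subF q) (0, 0, x, z::'b)"
proof (intro equalityI subsetI)
  fix v assume "v \<in> pclass4 (subF q) (0, 0, l * x, l * z)"
  then obtain m where "m \<in> subF q" "m \<noteq> 0" "v = (0, 0, m * (l * x), m * (l * z))"
    unfolding pclass4_def by auto
  thus "v \<in> pclass4 (subF q) (0, 0, x, z)" unfolding pclass4_def using assms
    by (intro CollectI exI[of _ "m * l"]) (simp add: subF_mult mult.assoc)
next
  fix v assume "v \<in> pclass4 (subF q) (0, 0, x, z)"
  then obtain m where "m \<in> subF q" "m \<noteq> 0" "v = (0, 0, m * x, m * z)"
    unfolding pclass4_def by auto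
  thus "v \<in> pclass4 (subF q) (0, 0, l * x, l * z)" unfolding pclass4_def using assms
    by (intro CollectI exI[of _ "m / l"]) (simp add: subF_divide)
qed

lemma card_n0_points:
  fixes w b1 d1 b2 d2 cA cB cC cD :: 'b
  shows "card (n0_points (subF q) w b1 d1 b2 d2 cA cB cC cD) = card {u \<in> P1_reps (subF q).
    cA * fst u ^ 3 + cB * fst u ^ 2 * snd u + cC * fst u * snd u ^ 2 + cD * snd u ^ 3 = 0}"
proof -
  let ?K = "subF q :: 'b set"
  define G where "G x z = cA * x ^ 3 + cB * x ^ 2 * z + cC * x * z ^ 2 + cD * z ^ 3" for x z :: 'b
  define \<pi> where "\<pi> u = pclass4 ?K (0, 0, fst u, snd u)" for u :: "'b \<times> 'b"
  have G_scale: "G (l * x) (l * z) = l ^ 3 * G x z" for l x z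
    by (simp add: G_def algebra_simps power3_eq_cube power2_eq_square)
  have "n0_points ?K w b1 d1 b2 d2 cA cB cC cD = \<pi> ` {u \<in> P1_reps ?K. G (fst u) (snd u) = 0}"
  proof (intro equalityI subsetI)
    fix pt assume "pt \<in> n0_points ?K w b1 d1 b2 d2 cA cB cC cD"
    then obtain x z where xz: "pt = pclass4 ?K (0, 0, x, z)" "x \<in> ?K" "z \<in> ?K" "(x, z) \<noteq> (0, 0)"
      "G x z = 0" unfolding n0_points_def by (auto simp: cubicS_def G_def)
    obtain l u where "l \<in> ?K" "l \<noteq> 0" "u \<in> P1_reps ?K" "x = l * fst u" "z = l * snd u"
    proof (cases "x = 0")
      case True
      thus ?thesis using that[of z "(0, 1)"] xz by (simp add: P1_reps_def)
    next
      case False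
      thus ?thesis using that[of x "(1, z / x)"] xz by (simp add: P1_reps_def subF_divide)
    qed
    moreover from this have "G (fst u) (snd u) = 0" using xz(5) G_scale by simp
    ultimately show "pt \<in> \<pi> ` {u \<in> P1_reps ?K. G (fst u) (snd u) = 0}"
      using xz(1) pclass4_subF_00_scale by (auto simp: \<pi>_def)
  next
    fix pt assume "pt \<in> \<pi> ` {u \<in> P1_reps ?K. G (fst u) (snd u) = 0}"
    then obtain x z where u: "(x, z) \<in> P1_reps ?K" "G x z = 0" "pt = \<pi> (x, z)" by auto
    show "pt \<in> n0_points ?K w b1 d1 b2 d2 cA cB cC cD"
      unfolding n0_points_def using u P1_reps_subF_in[OF u(1)] P1_reps_nonzero[OF u(1)]
      by (intro CollectI exI[of _ x] exI[of _ z]) (simp add: \<pi>_def cubicS_def G_def)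
  qed
  moreover have "inj_on \<pi> (P1_reps ?K)"
  proof (rule inj_onI)
    fix u v assume "u \<in> P1_reps ?K" "v \<in> P1_reps ?K" "\<pi> u = \<pi> v"
    moreover from this obtain l where "fst u = l * fst v" "snd u = l * snd v"
      using pclass4_subF_00_eq_imp unfolding \<pi>_def by blast
    ultimately show "u = v" unfolding P1_reps_def by auto
  qed
  ultimately show ?thesis by (simp add: card_image inj_on_subset[of _ "P1_reps ?K"] G_def)
qed

end

lemma alpha_cases:
  fixes n0 s :: nat
  assumes "n0 \<le> 3" "s \<le> n0"
  shows "(n0 \<in> {0, 2} \<and> 2 + 2 * int s - int n0 \<in> {-2, 0, 2, 4})
    \<or> (n0 \<in> {1, 3} \<and> 2 + 2 * int s - int n0 \<in> {-1, 1, 3, 5, 7})"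
  using assms by (auto simp: le_Suc_eq numeral_3_eq_3 numeral_2_eq_2)

locale conic_in_quadratic_extension = quadratic_extension q \<epsilon> \<omega>
  for q :: nat and \<epsilon> \<omega> :: "'b::{finite,field}" +
  fixes a b c e a1 a2 b1 b2 c1 c2 e1 e2 :: 'b
  assumes coordinates_in_subF: "a1 \<in> subF q" "a2 \<in> subF q" "b1 \<in> subF q" "b2 \<in> subF q"
      "c1 \<in> subF q" "c2 \<in> subF q" "e1 \<in> subF q" "e2 \<in> subF q"
    and coordinates: "a = a1 + \<epsilon> * a2" "b = b1 + \<epsilon> * b2" "c = c1 + \<epsilon> * c2" "e = e1 + \<epsilon> * e2"
    and b2_nonzero: "b2 \<noteq> 0"
    and nonsingular: "conic_nonsingular a b c 1 e"
    and \<Delta>_nonzero: "- b * c * 1 + a * 1 ^ 2 + b ^ 2 * e \<noteq> 0"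
    and \<Delta>_square: "\<exists>s. s ^ 2 = - b * c * 1 + a * 1 ^ 2 + b ^ 2 * e"
begin

text \<open>At \<open>(x, z)\<close> over
  \<open>F\<^sub>q\<close> it is the determinant of the \<open>F\<^sub>q\<close>-coordinates of \<open>L = b x + z\<close> and
  \<open>R = a x\<^sup>2 + c x z + e z\<^sup>2\<close>, where the conic restricted to the line through \<open>(0 : 1 : 0)\<close>
  and \<open>(x : 0 : z)\<close> is \<open>y L + R\<close>.\<close>
definition cubic :: "'b \<times> 'b \<Rightarrow> 'b" where
  "cubic u = (- a2 * b1 + a1 * b2) * fst u ^ 3 + (b2 * c1 - b1 * c2 - a2) * fst u ^ 2 * snd u
     + (- c2 + b2 * e1 - b1 * e2) * fst u * snd u ^ 2 + (- e2) * snd u ^ 3"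

definition square_count :: "'b \<times> 'b \<Rightarrow> nat" where
  "square_count u = card {y \<in> subF q. conicF a b c 1 e (fst u, y, snd u) \<noteq> 0
     \<and> (\<exists>t. t ^ 2 = conicF a b c 1 e (fst u, y, snd u))}"

lemma comp_coordinates:
  "comp1 (subF q) \<epsilon> a = a1" "comp2 (subF q) \<epsilon> a = a2" "comp1 (subF q) \<epsilon> b = b1" "comp2 (subF q) \<epsilon> b = b2"
  "comp1 (subF q) \<epsilon> c = c1" "comp2 (subF q) \<epsilon> c = c2" "comp1 (subF q) \<epsilon> e = e1" "comp2 (subF q) \<epsilon> e = e2"
  using coordinates coordinates_in_subF by (simp_all add: comp1_eq comp2_eq)

lemma conic_line_coordinates:
  assumes "x \<in> subF q" "z \<in> subF q"
  defines "L1 \<equiv> b1 * x + z" and "L2 \<equiv> b2 * x"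
    and "R1 \<equiv> a1 * x ^ 2 + c1 * x * z + e1 * z ^ 2" and "R2 \<equiv> a2 * x ^ 2 + c2 * x * z + e2 * z ^ 2"
  shows "L1 \<in> subF q" "L2 \<in> subF q" "R1 \<in> subF q" "R2 \<in> subF q"
    and "b * x + z = L1 + \<epsilon> * L2" "cubic (x, z) = L2 * R1 - L1 * R2"
    and "conicF a b c 1 e (x, y, z) = y * (L1 + \<epsilon> * L2) + (R1 + \<epsilon> * R2)"
  using assms coordinates_in_subF coordinates
  by (simp_all add: subF_closed cubic_def conicF_def algebra_simps power2_eq_square power3_eq_cube)

lemma b_notin_subF: "b \<notin> subF q"
proof
  assume "b \<in> subF q"
  moreover have "b1 + \<epsilon> * b2 = b + \<epsilon> * 0" using coordinates(2) by simp
  ultimately have "b2 = 0" using subF_decomp_unique[OF coordinates_in_subF(3,4) _ subF_0] by blast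
  thus False using b2_nonzero by contradiction
qed

lemma b_fst_plus_snd_nonzero: "u \<in> P1_reps (subF q) \<Longrightarrow> b * fst u + snd u \<noteq> 0"
  using b_notin_subF subF_uminus by (force simp: P1_reps_def add_eq_0_iff2)

lemma square_count_if_cubic_nonzero:
  assumes u: "u \<in> P1_reps (subF q)" and "cubic u \<noteq> 0"
  shows "2 * square_count u + 2 * (if \<exists>t. t ^ 2 = b * fst u + snd u then 1 else 0) = q + 1"
proof -
  obtain x z where xz: "u = (x, z)" "x \<in> subF q" "z \<in> subF q"
    using P1_reps_subF_in[OF u] by (cases u) auto
  note line = conic_line_coordinates[OF xz(2,3)]
  show ?thesis
    using card_square_values_independent[OF line(1-4)] \<open>cubic u \<noteq> 0\<close>
    unfolding square_count_def xz(1) fst_conv snd_conv line(5-7) by simp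
qed

lemma square_count_if_cubic_zero:
  assumes u: "u \<in> P1_reps (subF q)" and "cubic u = 0"
  shows "square_count u = (if \<exists>t. t ^ 2 = b * fst u + snd u then q - 1 else 0)"
proof -
  obtain x z where xz: "u = (x, z)" "x \<in> subF q" "z \<in> subF q"
    using P1_reps_subF_in[OF u] by (cases u) auto
  note line = conic_line_coordinates[OF xz(2,3)]
  show ?thesis
    using card_square_values_dependent[OF line(1-4)] \<open>cubic u = 0\<close> b_fst_plus_snd_nonzero[OF u]
    unfolding square_count_def xz(1) fst_conv snd_conv line(5-7) by simp
qed

lemma card_P1_reps_b_fst_plus_snd_square: "2 * card {u \<in> P1_reps (subF q). \<exists>t. t ^ 2 = b * fst u + snd u} = q + 1"
proof -
  let ?Y = "{y \<in> subF q. y + b \<noteq> 0 \<and> (\<exists>t. t ^ 2 = y + b)}"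
  have "\<exists>t. t ^ 2 = (1::'b)" by (rule exI[of _ 1]) simp
  hence "2 * card ?Y + 2 = q + 1"
    using card_square_values_independent[OF subF_1 subF_0, of b1 b2] coordinates(2)
      coordinates_in_subF(3,4) b2_nonzero by simp
  moreover have "{u \<in> P1_reps (subF q). \<exists>t. t ^ 2 = b * fst u + snd u} = (\<lambda>y. (1, y)) ` ?Y \<union> {(0, 1)}"
  proof -
    have "y + b \<noteq> 0" if "y \<in> subF q" for y
      using b_fst_plus_snd_nonzero[of "(1, y)"] that by (simp add: P1_reps_def add.commute)
    thus ?thesis using \<open>\<exists>t. t ^ 2 = (1::'b)\<close> by (force simp: P1_reps_def add.commute)
  qed
  moreover have "card ((\<lambda>y. (1::'b, y)) ` ?Y \<union> {(0, 1)}) = card ?Y + 1"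
    by (subst card_Un_disjoint) (auto simp: card_image inj_on_def)
  ultimately show ?thesis by simp
qed

text \<open>Evaluating the cubic at the (non-\<open>F\<^sub>q\<close>) zero \<open>(1, - b)\<close> of \<open>L\<close> shows it is not identically zero.\<close>
lemma cubic_at_1_minus_b: "cubic (1, - b) = b2 * (- b * c * 1 + a * 1 ^ 2 + b ^ 2 * e)"
  unfolding cubic_def coordinates by (simp add: algebra_simps power2_eq_square power3_eq_cube)

lemma card_cubic_zeros_le_3: "card {u \<in> P1_reps (subF q). cubic u = 0} \<le> 3"
proof -
  have "cubic (1, - b) \<noteq> 0" using cubic_at_1_minus_b b2_nonzero \<Delta>_nonzero by simp
  hence "\<not> (- a2 * b1 + a1 * b2 = 0 \<and> b2 * c1 - b1 * c2 - a2 = 0 \<and> - c2 + b2 * e1 - b1 * e2 = 0 \<and> - e2 = 0)"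
    by (auto simp: cubic_def)
  thus ?thesis unfolding cubic_def by (rule card_P1_reps_cubic_zeros_le_3)
qed

lemma double_square_count:
  assumes u: "u \<in> P1_reps (subF q)"
  shows "2 * int (square_count u) = (if cubic u = 0
    then 2 * (int q - 1) * (if \<exists>t. t ^ 2 = b * fst u + snd u then 1 else 0)
    else int q + 1 - 2 * (if \<exists>t. t ^ 2 = b * fst u + snd u then 1 else 0))"
proof (cases "cubic u = 0")
  case True
  thus ?thesis using square_count_if_cubic_zero[OF u True] q_gt_1
    by (cases "\<exists>t. t ^ 2 = b * fst u + snd u") (simp_all add: of_nat_diff)
next
  case False
  thus ?thesis using square_count_if_cubic_nonzero[OF u False]
    by (cases "\<exists>t. t ^ 2 = b * fst u + snd u") simp_all
qed

lemma Eq_conic_formula: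
  defines "N0 \<equiv> {u \<in> P1_reps (subF q). cubic u = 0}"
  defines "s \<equiv> card {u \<in> N0. \<exists>t. t ^ 2 = b * fst u + snd u}"
  shows "2 * int (Eq_conic q a b c 1 e) = int q ^ 2 + (1 + 2 * int s - int (card N0)) * int q - int (card N0)"
proof -
  let ?N = "P1_reps (subF q)"
  define sq where "sq u = (if \<exists>t. t ^ 2 = b * fst u + snd u then 1 else 0 :: int)" for u
  have N0_sub: "N0 \<subseteq> ?N" by (auto simp: N0_def)
  have sum_sq: "(\<Sum>u\<in>A. sq u) = int (card {u \<in> A. \<exists>t. t ^ 2 = b * fst u + snd u})" if "finite A" for A
    using sum.inter_filter[OF that, of "\<lambda>_. 1 :: int" "\<lambda>u. \<exists>t. t ^ 2 = b * fst u + snd u"]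
    by (simp add: sq_def)
  have count: "2 * int (square_count u) = (if u \<in> N0 then 2 * (int q - 1) * sq u else int q + 1 - 2 * sq u)"
    if "u \<in> ?N" for u
    using double_square_count[OF that] that by (simp add: N0_def sq_def)
  have "2 * int (Eq_conic q a b c 1 e) = (\<Sum>u\<in>?N. 2 * int (square_count u))"
    unfolding Eq_conic_eq_sum[OF nonsingular \<Delta>_nonzero \<Delta>_square]
    by (simp add: square_count_def of_nat_sum sum_distrib_left)
  also have "\<dots> = (\<Sum>u\<in>?N. if u \<in> N0 then 2 * (int q - 1) * sq u else int q + 1 - 2 * sq u)"
    using count by (intro sum.cong) auto
  also have "\<dots> = (\<Sum>u\<in>N0. 2 * (int q - 1) * sq u) + (\<Sum>u\<in>?N - N0. int q + 1 - 2 * sq u)"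
    by (simp add: sum.If_cases Int_absorb1[OF N0_sub] Diff_eq)
  also have "\<dots> = 2 * (int q - 1) * (\<Sum>u\<in>N0. sq u) + (int q + 1) * int (card (?N - N0))
      - 2 * ((\<Sum>u\<in>?N. sq u) - (\<Sum>u\<in>N0. sq u))"
  proof -
    have "(\<Sum>u\<in>?N - N0. int q + 1 - 2 * sq u) = (int q + 1) * int (card (?N - N0)) - 2 * (\<Sum>u\<in>?N - N0. sq u)"
      by (simp add: sum_subtractf sum_distrib_left)
    moreover have "(\<Sum>u\<in>N0. 2 * (int q - 1) * sq u) = 2 * (int q - 1) * (\<Sum>u\<in>N0. sq u)"
      by (simp add: sum_distrib_left)
    ultimately show ?thesis by (simp only: sum_diff[OF finite N0_sub])
  qed
  also have "\<dots> = 2 * (int q - 1) * int s + (int q + 1) * (int q + 1 - int (card N0))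
      - ((int q + 1) - 2 * int s)"
  proof -
    have "(\<Sum>u\<in>N0. sq u) = int s" using sum_sq[of N0] by (simp add: s_def)
    moreover have "2 * (\<Sum>u\<in>?N. sq u) = int q + 1"
      using arg_cong[OF card_P1_reps_b_fst_plus_snd_square, of int] sum_sq[of ?N] by simp
    moreover have "int (card (?N - N0)) = int q + 1 - int (card N0)"
      using card_Diff_subset[OF finite N0_sub] card_mono[OF finite N0_sub] card_P1_reps_subF
      by (simp add: of_nat_diff)
    ultimately show ?thesis by simp
  qed
  also have "\<dots> = int q ^ 2 + (1 + 2 * int s - int (card N0)) * int q - int (card N0)"
    by (simp add: algebra_simps power2_eq_square)
  finally show ?thesis .
qed


lemma Eq_conic_alpha:
  defines "n0 \<equiv> card {u \<in> P1_reps (subF q). cubic u = 0}"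
  shows "\<exists>\<alpha>::int. 2 * int (Eq_conic q a b c 1 e) = int q ^ 2 + (\<alpha> - 1) * int q - int n0
    \<and> ((n0 \<in> {0, 2} \<and> \<alpha> \<in> {-2, 0, 2, 4}) \<or> (n0 \<in> {1, 3} \<and> \<alpha> \<in> {-1, 1, 3, 5, 7}))"
proof -
  define s where "s = card {u \<in> {u \<in> P1_reps (subF q). cubic u = 0}. \<exists>t. t ^ 2 = b * fst u + snd u}"
  have "n0 \<le> 3" unfolding n0_def by (rule card_cubic_zeros_le_3)
  moreover have "s \<le> n0" unfolding s_def n0_def by (intro card_mono) auto
  ultimately have "(n0 \<in> {0, 2} \<and> 2 + 2 * int s - int n0 \<in> {-2, 0, 2, 4})
    \<or> (n0 \<in> {1, 3} \<and> 2 + 2 * int s - int n0 \<in> {-1, 1, 3, 5, 7})"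
    by (rule alpha_cases)
  moreover have "2 * int (Eq_conic q a b c 1 e) = int q ^ 2 + ((2 + 2 * int s - int n0) - 1) * int q - int n0"
    using Eq_conic_formula unfolding s_def n0_def by simp
  ultimately show ?thesis by (intro exI[of _ "2 + 2 * int s - int n0"]) simp
qed
end

theorem mainTheorem10:
  fixes q :: nat and \<omega> \<epsilon> a b c d e :: "'b::{finite, field}"
  assumes q_pp: "\<exists>p k. prime p \<and> k > 0 \<and> q = p ^ k"
    and q_odd: "odd q"
    and card: "card (UNIV :: 'b set) = q ^ 2"
    and \<omega>_in: "\<omega> \<in> subF q"
    and \<omega>_nonsq: "\<not> (\<exists>s \<in> subF q. s ^ 2 = \<omega>)"
    and \<epsilon>_sq: "\<epsilon> ^ 2 = \<omega>"
    and nonsing: "conic_nonsingular a b c d e"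
    and d1: "d = 1"
    and b_notin: "b \<notin> subF q"
    and sq: "- b * c * d + a * d ^ 2 + b ^ 2 * e \<noteq> 0"
            "\<exists>s. s ^ 2 = - b * c * d + a * d ^ 2 + b ^ 2 * e"
    and S_nonsing: "cubicS_nonsingular \<omega>
       (comp1 (subF q) \<epsilon> b) (comp1 (subF q) \<epsilon> d) (comp2 (subF q) \<epsilon> b) (comp2 (subF q) \<epsilon> d)
       (- comp2 (subF q) \<epsilon> a * comp1 (subF q) \<epsilon> b + comp1 (subF q) \<epsilon> a * comp2 (subF q) \<epsilon> b)
       (comp2 (subF q) \<epsilon> b * comp1 (subF q) \<epsilon> c - comp1 (subF q) \<epsilon> b * comp2 (subF q) \<epsilon> c
          - comp2 (subF q) \<epsilon> a * comp1 (subF q) \<epsilon> d + comp1 (subF q) \<epsilon> a * comp2 (subF q) \<epsilon> d)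
       (- comp2 (subF q) \<epsilon> c * comp1 (subF q) \<epsilon> d + comp1 (subF q) \<epsilon> c * comp2 (subF q) \<epsilon> d
          + comp2 (subF q) \<epsilon> b * comp1 (subF q) \<epsilon> e - comp1 (subF q) \<epsilon> b * comp2 (subF q) \<epsilon> e)
       (comp2 (subF q) \<epsilon> d * comp1 (subF q) \<epsilon> e - comp1 (subF q) \<epsilon> d * comp2 (subF q) \<epsilon> e)"
  shows "\<exists>\<alpha>::int.
    let n0 = card (n0_points (subF q) \<omega>
       (comp1 (subF q) \<epsilon> b) (comp1 (subF q) \<epsilon> d) (comp2 (subF q) \<epsilon> b) (comp2 (subF q) \<epsilon> d)
       (- comp2 (subF q) \<epsilon> a * comp1 (subF q) \<epsilon> b + comp1 (subF q) \<epsilon> a * comp2 (subF q) \<epsilon> b)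
       (comp2 (subF q) \<epsilon> b * comp1 (subF q) \<epsilon> c - comp1 (subF q) \<epsilon> b * comp2 (subF q) \<epsilon> c
          - comp2 (subF q) \<epsilon> a * comp1 (subF q) \<epsilon> d + comp1 (subF q) \<epsilon> a * comp2 (subF q) \<epsilon> d)
       (- comp2 (subF q) \<epsilon> c * comp1 (subF q) \<epsilon> d + comp1 (subF q) \<epsilon> c * comp2 (subF q) \<epsilon> d
          + comp2 (subF q) \<epsilon> b * comp1 (subF q) \<epsilon> e - comp1 (subF q) \<epsilon> b * comp2 (subF q) \<epsilon> e)
       (comp2 (subF q) \<epsilon> d * comp1 (subF q) \<epsilon> e - comp1 (subF q) \<epsilon> d * comp2 (subF q) \<epsilon> e))
    in 2 * int (Eq_conic q a b c d e) = int q ^ 2 + (\<alpha> - 1) * int q - int n0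
       \<and> ((n0 \<in> {0, 2} \<and> \<alpha> \<in> {-2, 0, 2, 4}) \<or> (n0 \<in> {1, 3} \<and> \<alpha> \<in> {-1, 1, 3, 5, 7}))"
proof -
  interpret quadratic_extension q \<epsilon> \<omega>
    using q_pp q_odd card \<omega>_in \<omega>_nonsq \<epsilon>_sq by unfold_locales
  obtain a1 a2 where a: "a1 \<in> subF q" "a2 \<in> subF q" "a = a1 + \<epsilon> * a2" using subF_decomp_exists by blast
  obtain b1 b2 where b: "b1 \<in> subF q" "b2 \<in> subF q" "b = b1 + \<epsilon> * b2" using subF_decomp_exists by blast
  obtain c1 c2 where c: "c1 \<in> subF q" "c2 \<in> subF q" "c = c1 + \<epsilon> * c2" using subF_decomp_exists by blast
  obtain e1 e2 where e: "e1 \<in> subF q" "e2 \<in> subF q" "e = e1 + \<epsilon> * e2" using subF_decomp_exists by blast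
  have "b2 \<noteq> 0" using b b_notin by auto
  interpret conic_in_quadratic_extension q \<epsilon> \<omega> a b c e a1 a2 b1 b2 c1 c2 e1 e2
    using a b c e \<open>b2 \<noteq> 0\<close> nonsing sq d1 by unfold_locales simp_all
  have n0: "card (n0_points (subF q) \<omega> b1 1 b2 0 (- a2 * b1 + a1 * b2)
      (b2 * c1 - b1 * c2 - a2 * 1 + a1 * 0) (- c2 * 1 + c1 * 0 + b2 * e1 - b1 * e2) (0 * e1 - 1 * e2))
    = card {u \<in> P1_reps (subF q). cubic u = 0}"
    unfolding card_n0_points cubic_def by simp
  show ?thesis
    unfolding d1 comp_coordinates comp1_1 comp2_1 Let_def n0 by (rule Eq_conic_alpha)
qed

end
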